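(* Let $\phi\in C_L(N)$ with $N\ge2$, let $h\in C_0^\infty$ be fixed, and set $\widetilde S_2(x)=\sum_{p\notin S_\phi}c_{\phi,2}(p)\log p\;h(xp^2)$. Then $\widetilde S_2(x)=O(x^{-1/2-\varepsilon})$ as $x\to0^+$ for every $\varepsilon>0$. Moreover, if $\sum_{p\le T,\,p\notin S_\phi}c_{\phi,2}(p)\log p=A_\phi T^{\mu}+O(T^{\nu+\varepsilon})$ for every $\varepsilon>0$ with constants $A_\phi,\mu\in\mathbb C$, $\nu>0$, $\mathrm{Re}(\mu)>\nu$, then for every $\varepsilon>0$, as $x\to0^+$, $$\widetilde S_2(x)=\mu A_\phi\int_0^\infty h(xu^2)u^{\mu}\frac{du}{u}+O(x^{-\nu/2-\varepsilon}).$$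
   Context: $C_0^\infty$ is the space of smooth compactly supported $h:(0,\infty)\to\mathbb C$. The Selberg class $\mathcal S$ consists of functions $L(s)$ such that: (S1) $L(s)=\sum_{n\ge1}a(n)n^{-s}$ converges absolutely for $\mathrm{Re}(s)>1$; (S2) for some integer $m\ge0$, $(s-1)^mL(s)$ extends to an entire function of finite order; (S3) there are $Q>0$, $r\ge1$, $\lambda_j>0$, $\mu_j\in\mathbb C$ with $\mathrm{Re}(\mu_j)\ge0$ and $|\omega|=1$ such that $L^*(s):=Q^s\prod_{j=1}^r\Gamma(\lambda_js+\mu_j)L(s)$ satisfies $L^*(s)=\omega\overline{L^*(1-\bar s)}$; (S4) $a(n)\ll_\varepsilon n^{\varepsilon}$ for every $\varepsilon>0$; (S5) $\log L(s)=\sum_{n\ge1}b(n)n^{-s}$ where $b(n)=0$ unless $n$ is a prime power $p^m$, $m\ge1$, and $b(n)\ll n^{\theta}$ for some $\theta<1/2$. $L\in\mathcal S$ has a rank $N$ Euler product if $L(s)=\prod_pP_p(p^{-s})^{-1}$ with $P_p(X)=1-c_1(p)X-\dots-c_N(p)X^N$ and $c_N(p)\ne0$ for all but finitely many $p$; $S_L$ is the finite set of primes with $c_N(p)=0$. For $\phi:(0,\infty)\to\mathbb C$ put $L_\phi(s)=\sum_{n\ge1}\phi(n)n^{-s}$. $C_L(N)$ is the set of smooth $\phi:(0,\infty)\to\mathbb C$ with $|\phi(u)|\le Cu^2$ for some $C>0$ and all $u>0$, $L_\phi\in\mathcal S$, and $L_\phi$ having a rank $N$ Euler product; $c_{\phi,l}(p)$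 is the coefficient $c_l(p)$ of $L_\phi$ and $S_\phi=S_{L_\phi}$. *)

theory Defs
  imports "HOL-Analysis.Analysis" "HOL-Library.Landau_Symbols"
begin

definition dirichlet_L :: "(nat \<Rightarrow> complex) \<Rightarrow> complex \<Rightarrow> complex" where
  "dirichlet_L a s = (\<Sum>n. a (Suc n) * of_nat (Suc n) powr (- s))"

definition finite_order :: "(complex \<Rightarrow> complex) \<Rightarrow> bool" where
  "finite_order F \<longleftrightarrow> (\<exists>\<rho> C. \<forall>s. norm (F s) \<le> C * exp (norm s powr \<rho>))"

text \<open>The continuation of L_a is F(s)/(s-1)^m; the functional equation of the
  meromorphic function L^* is required at every point where both sides are defined.\<close>
definition selberg_class :: "(nat \<Rightarrow> complex) \<Rightarrow> bool" where
  "selberg_class a \<longleftrightarrow>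
    (\<forall>s. Re s > 1 \<longrightarrow> summable (\<lambda>n. norm (a (Suc n) * of_nat (Suc n) powr (- s)))) \<and>
    (\<exists>(m::nat) F. F holomorphic_on UNIV \<and> finite_order F \<and>
       (\<forall>s. Re s > 1 \<longrightarrow> F s = (s - 1) ^ m * dirichlet_L a s) \<and>
       (\<exists>(Q::real) (r::nat) (lam::nat \<Rightarrow> real) (mu::nat \<Rightarrow> complex) (\<omega>::complex).
          Q > 0 \<and> r \<ge> 1 \<and> (\<forall>j\<in>{1..r}. lam j > 0 \<and> Re (mu j) \<ge> 0) \<and> norm \<omega> = 1 \<and>
          (let Lstar = (\<lambda>s. of_real Q powr s * (\<Prod>j=1..r. Gamma (of_real (lam j) * s + mu j))
                              * (F s / (s - 1) ^ m))
           in \<forall>s. s \<noteq> 0 \<and> s \<noteq> 1 \<and>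
                 (\<forall>j\<in>{1..r}. of_real (lam j) * s + mu j \<notin> \<int>\<^sub>\<le>\<^sub>0) \<and>
                 (\<forall>j\<in>{1..r}. of_real (lam j) * (1 - cnj s) + mu j \<notin> \<int>\<^sub>\<le>\<^sub>0) \<longrightarrow>
                 Lstar s = \<omega> * cnj (Lstar (1 - cnj s))))) \<and>
    (\<forall>\<epsilon>>0. \<exists>C. \<forall>n\<ge>1. norm (a n) \<le> C * real n powr \<epsilon>) \<and>
    (\<exists>b::nat \<Rightarrow> complex.
       (\<forall>n. b n \<noteq> 0 \<longrightarrow> (\<exists>p k. prime p \<and> k \<ge> 1 \<and> n = p ^ k)) \<and>
       (\<exists>\<theta>::real. \<theta> < 1/2 \<and> (\<exists>C. \<forall>n\<ge>1. norm (b n) \<le> C * real n powr \<theta>)) \<and>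
       (\<forall>s. Re s > 1 \<longrightarrow> dirichlet_L a s = exp (\<Sum>n. b (Suc n) * of_nat (Suc n) powr (- s))))"

definition euler_product_rank :: "(nat \<Rightarrow> complex) \<Rightarrow> nat \<Rightarrow> (nat \<Rightarrow> nat \<Rightarrow> complex) \<Rightarrow> bool" where
  "euler_product_rank a N c \<longleftrightarrow>
     finite {p::nat. prime p \<and> c N p = 0} \<and>
     (\<forall>s. Re s > 1 \<longrightarrow>
        (\<lambda>x. \<Prod>p\<in>{p::nat. prime p \<and> p \<le> x}.
               inverse (1 - (\<Sum>l=1..N. c l p * (of_nat p powr (- s)) ^ l)))
        \<longlonglongrightarrow> dirichlet_L a s)"

definition vderiv_iter :: "nat \<Rightarrow> (real \<Rightarrow> complex) \<Rightarrow> real \<Rightarrow> complex" where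
  "vderiv_iter k f = ((\<lambda>g y. vector_derivative g (at y)) ^^ k) f"

definition smooth_on :: "real set \<Rightarrow> (real \<Rightarrow> complex) \<Rightarrow> bool" where
  "smooth_on S f \<longleftrightarrow> (\<forall>k. \<forall>x\<in>S. vderiv_iter k f differentiable (at x))"

definition C0inf :: "(real \<Rightarrow> complex) \<Rightarrow> bool" where
  "C0inf h \<longleftrightarrow> smooth_on {0<..} h \<and>
     (\<exists>a b. 0 < a \<and> a \<le> b \<and> (\<forall>x>0. x \<notin> {a..b} \<longrightarrow> h x = 0))"

definition CL_class :: "(real \<Rightarrow> complex) \<Rightarrow> nat \<Rightarrow> bool" where
  "CL_class \<phi> N \<longleftrightarrow> smooth_on {0<..} \<phi> \<and>
     (\<exists>C>0. \<forall>u>0. norm (\<phi> u) \<le> C * u ^ 2) \<and>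
     selberg_class (\<lambda>n. \<phi> (real n)) \<and>
     (\<exists>c. euler_product_rank (\<lambda>n. \<phi> (real n)) N c)"

text \<open>S~_2(x) = sum_{p prime, p \<notin> S_\<phi>} c_2(p) log p h(x p^2) (finitely many nonzero terms).\<close>
definition S2tilde :: "(nat \<Rightarrow> nat \<Rightarrow> complex) \<Rightarrow> nat \<Rightarrow> (real \<Rightarrow> complex) \<Rightarrow> real \<Rightarrow> complex" where
  "S2tilde c N h x = (\<Sum>p. if prime p \<and> c N p \<noteq> 0
                           then c 2 p * of_real (ln (real p)) * h (x * (real p) ^ 2) else 0)"

end

(*
  Comparing the coefficients of p^(-2s) in the local factor
  1 / (1 - c_1(p) p^(-s) - ... - c_N(p) p^(-Ns)) with those of L(s) gives
  c_2(p) = a(p^2) - a(p)^2, hence c_2(p) = O(p^eps) by (S4). The comparison is made at the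
  integer points s = m -> oo: multiplied by the local factors at the primes p <= M, the series
  L(m) becomes 1 + O((M+1)^(-m)), and so does its truncation to a Dirichlet polynomial, whose
  coefficients at n <= M must then vanish except at n = 1. The tail of the Euler product is
  controlled because 1 - c_1(p) z - ... - c_N(p) z^N has no zero in |z| < 1/p, which bounds
  its coefficients by (1 + p)^N.

  Since h is supported in a compact subinterval of (0, oo), S~_2(x) only involves primes of
  size about x^(-1/2), which gives the first estimate. For the second, Abel summation against
  t -> h(x t^2) turns S~_2(x) into an integral of the summatory function of c_2(p) log p; its
  main term A T^mu gives mu A int h(x u^2) u^mu du/u after an integration by parts, and the
  remainder O(T^(nu+eps)) contributes O(x^(-nu/2-eps)).
*)
theory Submission
  imports Defs "HOL-Computational_Algebra.Fundamental_Theorem_Algebra"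
begin

section \<open>Local coefficients of an Euler product\<close>

lemma norm_coeff_prod_one_minus_le:
  fixes w :: "nat \<Rightarrow> complex"
  assumes "\<And>i. norm (w i) \<le> W"
  shows "norm (coeff (\<Prod>i<n. [:1, - w i:]) l) \<le> (1 + W) ^ n"
proof (induction n arbitrary: l)
  case 0
  then show ?case by (cases l) auto
next
  case (Suc n)
  define Q where "Q = (\<Prod>i<n. [:1, - w i:])"
  have W_nonneg: "0 \<le> W" by (meson assms norm_ge_zero order_trans)
  have "coeff (\<Prod>i<Suc n. [:1, - w i:]) l = coeff Q l - (if l = 0 then 0 else w n * coeff Q (l - 1))"
    by (cases l) (simp_all add: Q_def mult.commute[of _ "[:1, - w n:]"])
  then have "norm (coeff (\<Prod>i<Suc n. [:1, - w i:]) l)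
      \<le> norm (coeff Q l) + norm (if l = 0 then 0 else w n * coeff Q (l - 1))"
    by (metis norm_triangle_ineq4)
  also have "\<dots> \<le> (1 + W) ^ n + W * (1 + W) ^ n"
    using Suc.IH mult_mono[OF assms Suc.IH] W_nonneg
    by (intro add_mono) (auto simp: Q_def norm_mult)
  also have "\<dots> = (1 + W) ^ Suc n" by (simp add: algebra_simps)
  finally show ?case .
qed

lemma norm_coeff_le_of_no_roots_in_ball:
  fixes P :: "complex poly"
  assumes R: "R > 0" and P0: "poly P 0 = 1" and no_roots: "\<And>z. norm z < R \<Longrightarrow> poly P z \<noteq> 0"
  shows "norm (coeff P l) \<le> (1 + 1 / R) ^ degree P"
proof -
  define d where "d = degree P"
  obtain \<rho> where decomp: "P = smult (lead_coeff P) (\<Prod>i<d. [:- \<rho> i, 1:])"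
    unfolding d_def using complex_poly_decompose'[of P] by metis
  have root: "poly P (\<rho> i) = 0" if "i < d" for i
    using that by (subst decomp) (auto simp: poly_prod intro!: prod_zero bexI[of _ i])
  have \<rho>_large: "norm (\<rho> i) \<ge> R" if "i < d" for i
    using no_roots root[OF that] by force
  have \<rho>_nonzero: "\<rho> i \<noteq> 0" if "i < d" for i
    using \<rho>_large[OF that] R by auto
  define w where "w i = (if i < d then 1 / \<rho> i else 0)" for i
  have w_le: "norm (w i) \<le> 1 / R" for i
    using \<rho>_large R by (auto simp: w_def norm_divide divide_simps)
  have "[:- \<rho> i, 1:] = smult (- \<rho> i) [:1, - w i:]" if "i < d" for i
    using \<rho>_nonzero[OF that] that by (simp add: w_def)
  then have "(\<Prod>i<d. [:- \<rho> i, 1:]) = (\<Prod>i<d. smult (- \<rho> i) [:1, - w i:])"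
    by (metis (no_types, lifting) lessThan_iff prod.cong)
  also have "\<dots> = smult (\<Prod>i<d. - \<rho> i) (\<Prod>i<d. [:1, - w i:])"
    by (rule prod_smult)
  finally have "(\<Prod>i<d. [:- \<rho> i, 1:]) = smult (\<Prod>i<d. - \<rho> i) (\<Prod>i<d. [:1, - w i:])" .
  then have "P = smult (lead_coeff P * (\<Prod>i<d. - \<rho> i)) (\<Prod>i<d. [:1, - w i:])"
    using decomp by (metis smult_smult)
  moreover have "poly (\<Prod>i<d. [:1, - w i:]) 0 = 1"
    by (simp add: poly_prod)
  ultimately have P_eq: "P = (\<Prod>i<d. [:1, - w i:])"
    using P0 by (metis mult.right_neutral poly_smult smult_1_left)
  have "norm (coeff (\<Prod>i<d. [:1, - w i:]) l) \<le> (1 + 1 / R) ^ d"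
    by (rule norm_coeff_prod_one_minus_le[OF w_le])
  then have "norm (coeff P l) \<le> (1 + 1 / R) ^ d"
    by (subst P_eq)
  then show ?thesis
    unfolding d_def .
qed

lemma dirichlet_poly_coeff_eq_zero:
  fixes S :: "nat set" and G :: "nat \<Rightarrow> complex" and q K :: real
  assumes fin: "finite S" and S_pos: "0 \<notin> S"
    and bound: "\<And>m. m \<ge> m0 \<Longrightarrow> norm (\<Sum>n\<in>S. G n / of_nat n ^ m) \<le> K / q ^ m"
    and "n \<in> S" and "real n < q"
  shows "G n = 0"
  using assms(4,5)
proof (induction n rule: less_induct)
  case (less n)
  have n_pos: "n > 0" using less.prems S_pos by (cases n) auto
  have q_pos: "q > 0" using less.prems n_pos by linarith
  define S' where "S' = {n' \<in> S. n' > n}"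
  define S'' where "S'' = {n' \<in> S. n' < n}"
  have split: "(\<Sum>n'\<in>S. G n' / of_nat n' ^ m) = G n / of_nat n ^ m + (\<Sum>n'\<in>S'. G n' / of_nat n' ^ m)"
    for m
  proof -
    have "S = insert n (S' \<union> S'')" "n \<notin> S' \<union> S''" "S' \<inter> S'' = {}"
      using less.prems by (auto simp: S'_def S''_def)
    moreover have "finite S'" "finite S''" using fin by (simp_all add: S'_def S''_def)
    moreover have "(\<Sum>n'\<in>S''. G n' / of_nat n' ^ m) = 0"
      using less.IH less.prems by (intro sum.neutral) (auto simp: S''_def)
    ultimately show ?thesis
      by (metis (no_types, lifting) add.right_neutral finite_UnI sum.insert sum.union_disjoint)
  qed
  \<comment> \<open>Multiplying by \<open>n ^ m\<close> isolates \<open>G n\<close>; the other terms decay geometrically.\<close>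
  define f where "f m = K * (real n / q) ^ m + (\<Sum>n'\<in>S'. norm (G n') * (real n / real n') ^ m)" for m
  have "f \<longlonglongrightarrow> K * 0 + (\<Sum>n'\<in>S'. norm (G n') * 0)"
    unfolding f_def
  proof (intro tendsto_intros LIMSEQ_power_zero)
    show "norm (real n / q) < 1" using less.prems q_pos by simp
    show "norm (real n / real n') < 1" if "n' \<in> S'" for n'
      using that n_pos by (simp add: S'_def)
  qed
  then have f_lim: "f \<longlonglongrightarrow> 0" by simp
  have "norm (G n) \<le> f m" if "m \<ge> m0" for m
  proof -
    have G_eq: "G n = of_nat n ^ m * (\<Sum>n'\<in>S. G n' / of_nat n' ^ m) - (\<Sum>n'\<in>S'. G n' * (of_nat n / of_nat n') ^ m)"
      unfolding split using n_pos by (simp add: algebra_simps sum_distrib_left power_divide)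
    have "norm (G n) \<le> norm (of_nat n ^ m * (\<Sum>n'\<in>S. G n' / of_nat n' ^ m))
        + norm (\<Sum>n'\<in>S'. G n' * (of_nat n / of_nat n') ^ m)"
      unfolding G_eq by (rule norm_triangle_ineq4)
    moreover have "norm (of_nat n ^ m * (\<Sum>n'\<in>S. G n' / of_nat n' ^ m)) \<le> real n ^ m * (K / q ^ m)"
      unfolding norm_mult norm_power norm_of_nat using bound[OF that] by (rule mult_left_mono) simp
    moreover have "real n ^ m * (K / q ^ m) = K * (real n / q) ^ m"
      by (simp add: power_divide)
    moreover have "norm (\<Sum>n'\<in>S'. G n' * (of_nat n / of_nat n') ^ m)
        \<le> (\<Sum>n'\<in>S'. norm (G n') * (real n / real n') ^ m)"
      by (rule order.trans[OF norm_sum]) (simp add: norm_mult norm_power norm_divide)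
    ultimately show ?thesis unfolding f_def by linarith
  qed
  then have "norm (G n) \<le> 0"
    using f_lim by (intro tendsto_lowerbound[OF f_lim]) (auto simp: eventually_at_top_linorder)
  then show ?case by simp
qed

lemma dirichlet_poly_fiber_sums:
  fixes J :: "'a set" and \<nu> :: "'a \<Rightarrow> nat" and g :: "'a \<Rightarrow> complex" and q K :: real
  assumes fin: "finite J" and pos: "\<And>j. j \<in> J \<Longrightarrow> \<nu> j > 0"
    and bound: "\<And>m. m \<ge> m0 \<Longrightarrow> norm ((\<Sum>j\<in>J. g j / of_nat (\<nu> j) ^ m) - c0) \<le> K / q ^ m"
    and n: "n \<ge> 1" "real n < q"
  shows "(\<Sum>j | j \<in> J \<and> \<nu> j = n. g j) = (if n = 1 then c0 else 0)"
proof -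
  define S where "S = insert 1 (\<nu> ` J)"
  define G where "G n = (\<Sum>j | j \<in> J \<and> \<nu> j = n. g j) - (if n = 1 then c0 else 0)" for n
  have fin_S: "finite S" using fin by (simp add: S_def)
  have sum_eq: "(\<Sum>n\<in>S. G n / of_nat n ^ m) = (\<Sum>j\<in>J. g j / of_nat (\<nu> j) ^ m) - c0" for m
  proof -
    have "(\<Sum>n\<in>S. (\<Sum>j | j \<in> J \<and> \<nu> j = n. g j) / of_nat n ^ m) = (\<Sum>j\<in>J. g j / of_nat (\<nu> j) ^ m)"
      unfolding sum_divide_distrib using sum.group[OF fin fin_S, of \<nu> "\<lambda>j. g j / of_nat (\<nu> j) ^ m"]
      by (auto simp: S_def intro!: sum.cong)
    moreover have "(\<Sum>n\<in>S. (if n = 1 then c0 else 0) / of_nat n ^ m) = (\<Sum>n\<in>S. if n = 1 then c0 else 0)"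
      by (rule sum.cong) auto
    moreover have "\<dots> = c0"
      using fin_S by (simp add: S_def)
    ultimately show ?thesis
      by (simp add: G_def diff_divide_distrib sum_subtractf)
  qed
  have "G n = 0" if "n \<in> S"
  proof (rule dirichlet_poly_coeff_eq_zero[OF fin_S _ _ that n(2)])
    show "0 \<notin> S" using pos by (force simp: S_def)
    show "norm (\<Sum>n\<in>S. G n / of_nat n ^ m) \<le> K / q ^ m" if "m \<ge> m0" for m
      using bound[OF that] by (simp only: sum_eq)
  qed
  moreover have "G n = 0" if "n \<notin> S"
  proof -
    have "{j. j \<in> J \<and> \<nu> j = n} = {}" "n \<noteq> 1" using that by (auto simp: S_def)
    then show ?thesis by (simp only: G_def sum.empty) simp
  qed
  ultimately show ?thesis
    unfolding G_def by (cases "n \<in> S") auto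
qed

definition euler_factor :: "(nat \<Rightarrow> nat \<Rightarrow> complex) \<Rightarrow> nat \<Rightarrow> nat \<Rightarrow> complex \<Rightarrow> complex" where
  "euler_factor c N p z = 1 - (\<Sum>l=1..N. c l p * z ^ l)"

definition euler_coeff :: "(nat \<Rightarrow> nat \<Rightarrow> complex) \<Rightarrow> nat \<Rightarrow> nat \<Rightarrow> complex" where
  "euler_coeff c p l = (if l = 0 then 1 else - c l p)"

lemma euler_factor_eq_sum: "euler_factor c N p z = (\<Sum>l\<le>N. euler_coeff c p l * z ^ l)"
proof -
  have "{..N} = insert 0 {1..N}" by auto
  then show ?thesis
    by (simp add: euler_factor_def euler_coeff_def sum_negf[symmetric])
qed

lemma euler_product_rank_tendsto:
  assumes "euler_product_rank a N c" and "Re s > 1"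
  shows "(\<lambda>x. \<Prod>p | prime p \<and> p \<le> x. inverse (euler_factor c N p (of_nat p powr - s)))
           \<longlonglongrightarrow> dirichlet_L a s"
  using assms unfolding euler_product_rank_def euler_factor_def by blast

lemma prime_prod_inverse_factor_nonzero:
  fixes g :: "nat \<Rightarrow> 'a :: real_normed_field"
  assumes lim: "(\<lambda>x. \<Prod>p | prime p \<and> p \<le> x. inverse (g p)) \<longlonglongrightarrow> L"
    and "L \<noteq> 0" and "prime r"
  shows "g r \<noteq> 0"
proof
  assume "g r = 0"
  then have "eventually (\<lambda>x. (\<Prod>p | prime p \<and> p \<le> x. inverse (g p)) = 0) sequentially"
    using \<open>prime r\<close> by (auto simp: eventually_at_top_linorder intro!: exI[of _ r] prod_zero)
  then have "L = 0"
    using tendsto_unique[OF _ lim tendsto_eventually] by simp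
  with \<open>L \<noteq> 0\<close> show False by simp
qed

lemma ex_powr_eq_in_ball:
  fixes r :: real and z :: complex
  assumes r: "r > 1" and z: "z \<noteq> 0" "norm z < 1 / r"
  shows "\<exists>s. Re s > 1 \<and> of_real r powr - s = z"
proof (intro exI conjI)
  define s where "s = - Ln z / of_real (ln r)"
  have ln_r: "ln r > 0" using r by simp
  have "ln (norm z) < ln (1 / r)" using z r by simp
  then have "ln (norm z) < - ln r" using r by (simp add: ln_div)
  moreover have "Re s = - ln (norm z) / ln r" using z by (simp add: s_def)
  ultimately have "1 * ln r < Re s * ln r" using ln_r by (simp add: field_simps)
  then show "Re s > 1" using ln_r by (simp only: mult_less_cancel_right)
  have "of_real r powr - s = exp (- s * of_real (ln r))"
    using r by (simp add: powr_def Ln_of_real)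
  also have "\<dots> = z" using ln_r z by (simp add: s_def)
  finally show "of_real r powr - s = z" .
qed

lemma euler_factor_coeff_bound:
  assumes no_roots: "\<And>z. norm z < 1 / real r \<Longrightarrow> euler_factor c N r z \<noteq> 0"
    and "r > 0" and l: "l \<in> {1..N}"
  shows "norm (c l r) \<le> (1 + real r) ^ N"
proof -
  define P :: "complex poly" where "P = 1 - (\<Sum>l=1..N. monom (c l r) l)"
  have poly_P: "poly P z = euler_factor c N r z" for z
    by (simp add: P_def euler_factor_def poly_sum poly_monom)
  have "degree P \<le> N"
    unfolding P_def
    by (intro degree_diff_le) (auto intro!: degree_sum_le order.trans[OF degree_monom_le])
  have "norm (coeff P l) \<le> (1 + 1 / (1 / real r)) ^ degree P"
  proof (rule norm_coeff_le_of_no_roots_in_ball)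
    show "poly P 0 = 1" by (simp add: poly_P euler_factor_def)
  qed (use \<open>r > 0\<close> no_roots in \<open>simp_all add: poly_P\<close>)
  also have "\<dots> \<le> (1 + real r) ^ N"
    using \<open>degree P \<le> N\<close> by (simp add: power_increasing)
  finally have "norm (coeff P l) \<le> (1 + real r) ^ N" .
  moreover have "coeff P l = - c l r"
    using l by (simp add: P_def coeff_sum)
  ultimately show ?thesis by simp
qed

lemma euler_product_coeff_bound:
  assumes "euler_product_rank a N c" and L_nonzero: "\<And>s. Re s > 1 \<Longrightarrow> dirichlet_L a s \<noteq> 0"
    and r: "prime r" and "l \<in> {1..N}"
  shows "norm (c l r) \<le> (1 + real r) ^ N"
proof (rule euler_factor_coeff_bound)
  fix z :: complex assume z: "norm z < 1 / real r"
  show "euler_factor c N r z \<noteq> 0"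
  proof (cases "z = 0")
    case False
    then obtain s where "Re s > 1" "of_real (real r) powr - s = z"
      using ex_powr_eq_in_ball[of "real r" z] z prime_gt_1_nat[OF r] by auto
    then show ?thesis
      using prime_prod_inverse_factor_nonzero[OF euler_product_rank_tendsto L_nonzero r] assms(1)
      by auto
  qed (simp add: euler_factor_def)
qed (use assms prime_gt_0_nat in auto)

lemma norm_one_minus_euler_factor_le:
  fixes q :: real
  assumes coeff_le: "\<And>l. l \<in> {1..N} \<Longrightarrow> norm (c l r) \<le> (1 + real r) ^ N"
    and q: "1 \<le> q" "q \<le> real r" and m: "N + 2 \<le> m"
  shows "norm (1 - euler_factor c N r (1 / of_nat r ^ m))
           \<le> real N * 2 ^ N * q ^ (N + 2) / q ^ m / real r ^ 2"
proof -
  have r: "real r \<ge> 1" using q by linarith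
  obtain d where d: "m = N + 2 + d" using le_Suc_ex[OF m] by blast
  have r_pow: "real r ^ m = real r ^ N * (real r ^ 2 * real r ^ d)"
    unfolding d power_add by (simp only: mult.assoc)
  have q_pow: "q ^ m = q ^ (N + 2) * q ^ d"
    by (simp add: d power_add)
  have "norm (1 - euler_factor c N r (1 / of_nat r ^ m))
      \<le> (\<Sum>l=1..N. norm (c l r * (1 / of_nat r ^ m) ^ l))"
    unfolding euler_factor_def by (simp add: norm_sum)
  also have "\<dots> \<le> (\<Sum>l=1..N. (2 * real r) ^ N * (1 / real r ^ m))"
  proof (rule sum_mono)
    fix l assume l: "l \<in> {1..N}"
    have "(1 / real r ^ m) ^ l \<le> (1 / real r ^ m) ^ 1"
      using l r by (intro power_decreasing) auto
    moreover have "(1 + real r) ^ N \<le> (2 * real r) ^ N"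
      using r by (intro power_mono) auto
    ultimately show "norm (c l r * (1 / of_nat r ^ m) ^ l) \<le> (2 * real r) ^ N * (1 / real r ^ m)"
      using coeff_le[OF l] unfolding norm_mult
      by (intro mult_mono) (auto simp: norm_power norm_divide)
  qed
  also have "\<dots> = real N * 2 ^ N * real r ^ N / (real r ^ N * (real r ^ 2 * real r ^ d))"
    by (simp add: r_pow power_mult_distrib)
  also have "\<dots> = real N * 2 ^ N / (real r ^ 2 * real r ^ d)"
    using r by simp
  also have "\<dots> \<le> real N * 2 ^ N / (real r ^ 2 * q ^ d)"
    using q r by (intro divide_left_mono mult_left_mono power_mono mult_pos_pos) auto
  also have "\<dots> = real N * 2 ^ N * q ^ (N + 2) / q ^ m / real r ^ 2"
    using q by (simp add: q_pow)
  finally show ?thesis .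
qed

lemma norm_prod_inverse_one_minus_sub_one_le:
  fixes u :: "nat \<Rightarrow> complex" and T :: "nat set" and B Z :: real
  assumes "finite T" and u_le: "\<And>r. r \<in> T \<Longrightarrow> norm (u r) \<le> B / real r ^ 2"
    and u_half: "\<And>r. r \<in> T \<Longrightarrow> norm (u r) \<le> 1 / 2"
    and Z: "(\<Sum>r\<in>T. 1 / real r ^ 2) \<le> Z" and "B \<ge> 0" and BZ: "2 * B * Z \<le> 1 / 2"
  shows "norm ((\<Prod>r\<in>T. inverse (1 - u r)) - 1) \<le> 4 * B * Z"
proof -
  define w where "w r = inverse (1 - u r) - 1" for r
  have w_le: "norm (w r) \<le> 2 * (B / real r ^ 2)" if r: "r \<in> T" for r
  proof -
    have denom: "norm (1 - u r) \<ge> 1 / 2"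
      using u_half[OF r] norm_triangle_ineq2[of 1 "u r"] by simp
    then have "1 - u r \<noteq> 0" by auto
    then have "w r = u r / (1 - u r)"
      by (simp add: w_def field_simps)
    then have "norm (w r) = norm (u r) / norm (1 - u r)"
      by (simp add: norm_divide)
    also have "\<dots> \<le> norm (u r) / (1 / 2)"
      using denom by (intro divide_left_mono) auto
    finally show ?thesis using u_le[OF r] by simp
  qed
  have Z_nonneg: "0 \<le> Z"
    using Z sum_nonneg[of T "\<lambda>r. 1 / real r ^ 2"] by simp
  have "norm ((\<Prod>r\<in>T. 1 + w r) - 1) \<le> (\<Prod>r\<in>T. 1 + norm (w r)) - 1"
    by (rule norm_prod_minus1_le_prod_minus1)
  also have "(\<Prod>r\<in>T. 1 + norm (w r)) \<le> exp (\<Sum>r\<in>T. norm (w r))"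
    using \<open>finite T\<close> by (simp add: exp_sum prod_mono)
  also have "(\<Sum>r\<in>T. norm (w r)) \<le> 2 * B * Z"
  proof -
    have "(\<Sum>r\<in>T. norm (w r)) \<le> (\<Sum>r\<in>T. 2 * B * (1 / real r ^ 2))"
      using w_le by (intro sum_mono) auto
    also have "\<dots> = 2 * B * (\<Sum>r\<in>T. 1 / real r ^ 2)"
      by (simp add: sum_distrib_left)
    also have "\<dots> \<le> 2 * B * Z"
      using Z \<open>B \<ge> 0\<close> by (intro mult_left_mono) auto
    finally show ?thesis .
  qed
  also have "exp (2 * B * Z) \<le> 1 + 2 * (2 * B * Z)"
    using BZ Z_nonneg \<open>B \<ge> 0\<close> by (intro real_exp_bound_lemma) auto
  finally show ?thesis by (simp add: w_def)
qed

lemma prod_euler_factor_eq_sum_PiE: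
  assumes "finite F"
  shows "(\<Prod>r\<in>F. euler_factor c N r (1 / of_nat r ^ m))
       = (\<Sum>k\<in>PiE F (\<lambda>_. {..N}). (\<Prod>r\<in>F. euler_coeff c r (k r)) / of_nat (\<Prod>r\<in>F. r ^ k r) ^ m)"
proof -
  have "(\<Prod>r\<in>F. euler_factor c N r (1 / of_nat r ^ m))
      = (\<Prod>r\<in>F. \<Sum>l\<le>N. euler_coeff c r l * (1 / of_nat r ^ m) ^ l)"
    by (simp add: euler_factor_eq_sum)
  also have "\<dots> = (\<Sum>k\<in>PiE F (\<lambda>_. {..N}). \<Prod>r\<in>F. euler_coeff c r (k r) * (1 / of_nat r ^ m) ^ k r)"
    using assms by (rule prod_sum_PiE) simp
  also have "\<dots> = (\<Sum>k\<in>PiE F (\<lambda>_. {..N}). (\<Prod>r\<in>F. euler_coeff c r (k r)) / of_nat (\<Prod>r\<in>F. r ^ k r) ^ m)"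
  proof (rule sum.cong[OF refl])
    fix k :: "nat \<Rightarrow> nat"
    have "(\<Prod>r\<in>F. (1 / of_nat r ^ m :: complex) ^ k r) = 1 / of_nat (\<Prod>r\<in>F. r ^ k r) ^ m"
      by (simp add: power_one_over prod_dividef prod_power_distrib flip: power_mult mult.commute)
    then show "(\<Prod>r\<in>F. euler_coeff c r (k r) * (1 / of_nat r ^ m) ^ k r)
        = (\<Prod>r\<in>F. euler_coeff c r (k r)) / of_nat (\<Prod>r\<in>F. r ^ k r) ^ m"
      by (simp add: prod.distrib)
  qed
  finally show ?thesis .
qed

lemma prod_prime_powers_eq_prime_power:
  fixes F :: "nat set" and k :: "nat \<Rightarrow> nat"
  assumes "finite F" and prime: "\<And>r. r \<in> F \<Longrightarrow> prime r" and "p \<in> F" and "k \<in> extensional F"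
    and eq: "(\<Prod>r\<in>F. r ^ k r) = p ^ t"
  shows "k = (\<lambda>r\<in>F. if r = p then t else 0)"
proof
  fix r
  show "k r = (\<lambda>r\<in>F. if r = p then t else 0) r"
  proof (cases "r \<in> F")
    case True
    have "k r = multiplicity r (\<Prod>r\<in>F. r ^ k r)"
      using multiplicity_prod_prime_powers[OF \<open>finite F\<close>, of r k] prime True by auto
    also have "\<dots> = (if r = p then t else 0)"
      using prime[OF True] prime[OF \<open>p \<in> F\<close>] by (auto simp: eq multiplicity_distinct_prime_power)
    finally show ?thesis using True by simp
  qed (use \<open>k \<in> extensional F\<close> in \<open>auto simp: extensional_def\<close>)
qed

lemma prime_power_fiber_eq:
  fixes F :: "nat set" and p M N i :: nat
  assumes "finite F" and prime: "\<And>r. r \<in> F \<Longrightarrow> prime r" and "p \<in> F" and "i \<le> N" and "p ^ i \<le> M"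
  shows "{x \<in> {1..M} \<times> PiE F (\<lambda>_. {..N}). fst x * (\<Prod>r\<in>F. r ^ snd x r) = p ^ i}
       = (\<lambda>t. (p ^ (i - t), \<lambda>r\<in>F. if r = p then t else 0)) ` {..i}"
proof -
  define \<kappa> where "\<kappa> t = (\<lambda>r\<in>F. if r = p then t else (0::nat))" for t
  have p: "prime p" using prime \<open>p \<in> F\<close> by blast
  show ?thesis
  proof (intro equalityI subsetI)
    fix x assume x: "x \<in> {x \<in> {1..M} \<times> PiE F (\<lambda>_. {..N}). fst x * (\<Prod>r\<in>F. r ^ snd x r) = p ^ i}"
    obtain j k where x_eq: "x = (j, k)" by fastforce
    have k: "k \<in> PiE F (\<lambda>_. {..N})" and jk: "j * (\<Prod>r\<in>F. r ^ k r) = p ^ i"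
      using x by (auto simp: x_eq)
    then obtain t where t: "t \<le> i" "(\<Prod>r\<in>F. r ^ k r) = p ^ t"
      using divides_primepow_nat[OF p] by (metis dvd_triv_right)
    have "k = \<kappa> t"
      unfolding \<kappa>_def using prod_prime_powers_eq_prime_power[OF \<open>finite F\<close> prime \<open>p \<in> F\<close> _ t(2)] k
      by (auto simp: PiE_def)
    moreover have "j * p ^ t = p ^ (i - t) * p ^ t"
      using jk t by (simp flip: power_add)
    then have "j = p ^ (i - t)"
      using p by (simp add: prime_gt_0_nat)
    ultimately show "x \<in> (\<lambda>t. (p ^ (i - t), \<lambda>r\<in>F. if r = p then t else 0)) ` {..i}"
      using t x_eq by (auto simp: \<kappa>_def)
  next
    fix x assume "x \<in> (\<lambda>t. (p ^ (i - t), \<lambda>r\<in>F. if r = p then t else 0)) ` {..i}"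
    then obtain t where t: "t \<le> i" and x_eq: "x = (p ^ (i - t), \<kappa> t)" by (auto simp: \<kappa>_def)
    have "(\<Prod>r\<in>F. r ^ \<kappa> t r) = (\<Prod>r\<in>F. if r = p then p ^ t else 1)"
      by (intro prod.cong) (auto simp: \<kappa>_def)
    then have "(\<Prod>r\<in>F. r ^ \<kappa> t r) = p ^ t"
      using \<open>finite F\<close> \<open>p \<in> F\<close> by simp
    moreover have "p ^ (i - t) \<le> p ^ i" using prime_ge_1_nat[OF p] by (intro power_increasing) auto
    moreover have "p ^ (i - t) * p ^ t = p ^ i" using t by (simp flip: power_add)
    moreover have "\<kappa> t \<in> PiE F (\<lambda>_. {..N})" using t \<open>i \<le> N\<close> by (auto simp: \<kappa>_def)
    ultimately show "x \<in> {x \<in> {1..M} \<times> PiE F (\<lambda>_. {..N}). fst x * (\<Prod>r\<in>F. r ^ snd x r) = p ^ i}"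
      using x_eq \<open>p ^ i \<le> M\<close> p by (auto simp: Suc_le_eq prime_gt_0_nat)
  qed
qed

lemma sum_prime_power_fiber:
  fixes F :: "nat set" and p M N i :: nat and g :: "nat \<times> (nat \<Rightarrow> nat) \<Rightarrow> complex"
  assumes "finite F" and "\<And>r. r \<in> F \<Longrightarrow> prime r" and "p \<in> F" and "i \<le> N" and "p ^ i \<le> M"
  shows "(\<Sum>x | x \<in> {1..M} \<times> PiE F (\<lambda>_. {..N}) \<and> fst x * (\<Prod>r\<in>F. r ^ snd x r) = p ^ i. g x)
       = (\<Sum>t\<le>i. g (p ^ (i - t), \<lambda>r\<in>F. if r = p then t else 0))"
proof -
  have "inj_on (\<lambda>t. (p ^ (i - t), \<lambda>r\<in>F. if r = p then t else (0::nat))) {..i}"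
    using \<open>p \<in> F\<close> by (intro inj_onI) (auto dest: fun_cong[of _ _ p])
  then show ?thesis
    using prime_power_fiber_eq[OF assms] by (simp add: sum.reindex)
qed

lemma norm_divide_power_le:
  fixes z :: complex and q :: real
  assumes "1 \<le> q" and "q \<le> real n" and "m \<ge> 2"
  shows "norm (z / of_nat n ^ m) \<le> norm (z / of_nat n ^ 2) * (q ^ 2 / q ^ m)"
proof -
  obtain d where d: "m = 2 + d" using le_Suc_ex[OF assms(3)] by blast
  have "norm (z / of_nat n ^ m) = norm z / (real n ^ 2 * real n ^ d)"
    by (simp add: d power_add norm_mult norm_divide norm_power power2_eq_square)
  also have "\<dots> \<le> norm z / (real n ^ 2 * q ^ d)"
    using assms by (intro divide_left_mono mult_left_mono power_mono mult_pos_pos) auto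
  also have "\<dots> = norm (z / of_nat n ^ 2) * (q ^ 2 / (q ^ 2 * q ^ d))"
    using assms by (simp add: norm_divide norm_power)
  also have "q ^ 2 * q ^ d = q ^ m"
    unfolding d by (rule power_add[symmetric])
  finally show ?thesis .
qed

lemma norm_dirichlet_series_sub_partial_sum_le:
  fixes a :: "nat \<Rightarrow> complex"
  assumes summable: "summable (\<lambda>n. norm (a (Suc n) / of_nat (Suc n) ^ 2))" and m: "m \<ge> 2"
  shows "norm ((\<Sum>n. a (Suc n) / of_nat (Suc n) ^ m) - (\<Sum>j=1..M. a j / of_nat j ^ m))
           \<le> (\<Sum>n. norm (a (Suc n) / of_nat (Suc n) ^ 2)) * (real M + 1) ^ 2 / (real M + 1) ^ m"
proof -
  define q where "q = real M + 1"
  define f where "f = (\<lambda>n. a (Suc n) / of_nat (Suc n) ^ m)"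
  define f2 where "f2 = (\<lambda>n. norm (a (Suc n) / of_nat (Suc n) ^ 2))"
  have q: "q \<ge> 1" by (simp add: q_def)
  have f_le: "norm (f (n + M)) \<le> f2 (n + M) * (q ^ 2 / q ^ m)" for n
    unfolding f_def f2_def using m by (intro norm_divide_power_le) (simp_all add: q_def)
  have summable_f2: "summable (\<lambda>n. f2 (n + M))"
    using summable unfolding f2_def by (rule summable_ignore_initial_segment)
  have summable_f: "summable (\<lambda>n. norm (f (n + M)))"
    using f_le
    by (intro summable_comparison_test[OF _ summable_mult2[OF summable_f2, of "q ^ 2 / q ^ m"]]) auto
  have "summable (\<lambda>n. f (n + M))"
    by (rule summable_norm_cancel[OF summable_f])
  then have "suminf f = (\<Sum>n. f (n + M)) + (\<Sum>i<M. f i)"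
    by (intro suminf_split_initial_segment) (simp only: summable_iff_shift)
  moreover have "(\<Sum>i<M. f i) = (\<Sum>j=1..M. a j / of_nat j ^ m)"
    by (simp add: f_def sum.atLeast1_atMost_eq del: of_nat_Suc)
  ultimately have "norm ((\<Sum>n. a (Suc n) / of_nat (Suc n) ^ m) - (\<Sum>j=1..M. a j / of_nat j ^ m))
      = norm (\<Sum>n. f (n + M))"
    by (simp add: f_def)
  also have "\<dots> \<le> (\<Sum>n. norm (f (n + M)))"
    by (rule summable_norm[OF summable_f])
  also have "\<dots> \<le> (\<Sum>n. f2 (n + M) * (q ^ 2 / q ^ m))"
    by (rule suminf_le[OF f_le summable_f summable_mult2[OF summable_f2]])
  also have "\<dots> = (\<Sum>n. f2 (n + M)) * (q ^ 2 / q ^ m)"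
    by (rule suminf_mult2[symmetric, OF summable_f2])
  also have "\<dots> \<le> suminf f2 * (q ^ 2 / q ^ m)"
  proof (rule mult_right_mono)
    have "suminf f2 = (\<Sum>n. f2 (n + M)) + (\<Sum>i<M. f2 i)"
      by (rule suminf_split_initial_segment) (use summable in \<open>simp add: f2_def\<close>)
    moreover have "(\<Sum>i<M. f2 i) \<ge> 0"
      by (simp add: f2_def sum_nonneg)
    ultimately show "(\<Sum>n. f2 (n + M)) \<le> suminf f2" by linarith
  qed (use q in simp)
  finally show ?thesis
    by (simp add: f2_def q_def)
qed

lemma norm_dirichlet_poly_le:
  fixes e :: "'a \<Rightarrow> complex" and \<nu> :: "'a \<Rightarrow> nat"
  assumes "\<And>k. k \<in> K \<Longrightarrow> \<nu> k > 0"
  shows "norm (\<Sum>k\<in>K. e k / of_nat (\<nu> k) ^ m) \<le> (\<Sum>k\<in>K. norm (e k))"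
proof (rule order.trans[OF norm_sum sum_mono])
  fix k assume "k \<in> K"
  then have "real (\<nu> k) ^ m \<ge> 1" using assms by (simp add: Suc_le_eq)
  then show "norm (e k / of_nat (\<nu> k) ^ m) \<le> norm (e k)"
    by (simp add: norm_divide norm_power divide_le_eq mult_le_cancel_left1 order_trans)
qed

lemma dirichlet_poly_mult:
  fixes f :: "nat \<Rightarrow> complex" and g :: "'a \<Rightarrow> complex" and \<nu> :: "'a \<Rightarrow> nat"
  shows "(\<Sum>j\<in>J. f j / of_nat j ^ m) * (\<Sum>k\<in>K. g k / of_nat (\<nu> k) ^ m)
       = (\<Sum>x\<in>J \<times> K. f (fst x) * g (snd x) / of_nat (fst x * \<nu> (snd x)) ^ m)"
  by (simp add: sum_product sum.cartesian_product' power_mult_distrib times_divide_times_eq)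

locale integer_euler_product =
  fixes a :: "nat \<Rightarrow> complex" and c :: "nat \<Rightarrow> nat \<Rightarrow> complex" and N :: nat
  assumes summable_2: "summable (\<lambda>n. norm (a (Suc n) / of_nat (Suc n) ^ 2))"
    and tendsto: "\<And>m. m \<ge> 2 \<Longrightarrow>
      (\<lambda>x. \<Prod>r | prime r \<and> r \<le> x. inverse (euler_factor c N r (1 / of_nat r ^ m)))
        \<longlonglongrightarrow> (\<Sum>n. a (Suc n) / of_nat (Suc n) ^ m)"
    and factor_nonzero: "\<And>r m. prime r \<Longrightarrow> m \<ge> 2 \<Longrightarrow> euler_factor c N r (1 / of_nat r ^ m) \<noteq> 0"
    and coeff_le: "\<And>r l. prime r \<Longrightarrow> l \<in> {1..N} \<Longrightarrow> norm (c l r) \<le> (1 + real r) ^ N"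
begin

lemma partial_euler_products_close:
  fixes B :: real and M m x :: nat
  assumes tail_le: "\<And>r. prime r \<Longrightarrow> M < r \<Longrightarrow>
      norm (1 - euler_factor c N r (1 / of_nat r ^ m)) \<le> B / real r ^ 2"
    and "0 \<le> B" and "B \<le> 1 / 2" and "2 * B * (\<Sum>n. inverse (real n ^ 2)) \<le> 1 / 2"
    and "m \<ge> 2" and "M \<le> x"
  shows "norm ((\<Prod>r | prime r \<and> r \<le> M. euler_factor c N r (1 / of_nat r ^ m))
              * (\<Prod>r | prime r \<and> r \<le> x. inverse (euler_factor c N r (1 / of_nat r ^ m))) - 1)
           \<le> 4 * B * (\<Sum>n. inverse (real n ^ 2))"
proof -
  define f where "f r = euler_factor c N r (1 / of_nat r ^ m)" for r
  define F where "F = {r. prime r \<and> r \<le> M}"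
  define T where "T = {r. prime r \<and> M < r \<and> r \<le> x}"
  have "{r. prime r \<and> r \<le> x} = F \<union> T" "F \<inter> T = {}"
    using \<open>M \<le> x\<close> by (auto simp: F_def T_def)
  then have "(\<Prod>r | prime r \<and> r \<le> x. inverse (f r)) = (\<Prod>r\<in>F. inverse (f r)) * (\<Prod>r\<in>T. inverse (f r))"
    by (simp add: F_def T_def prod.union_disjoint)
  moreover have "(\<Prod>r\<in>F. f r) * (\<Prod>r\<in>F. inverse (f r)) = 1"
    using factor_nonzero \<open>m \<ge> 2\<close> by (simp add: f_def F_def flip: prod.distrib)
  ultimately have eq: "(\<Prod>r\<in>F. f r) * (\<Prod>r | prime r \<and> r \<le> x. inverse (f r))
      = (\<Prod>r\<in>T. inverse (1 - (1 - f r)))"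
    by (simp add: mult.assoc[symmetric])
  have "norm ((\<Prod>r\<in>T. inverse (1 - (1 - f r))) - 1) \<le> 4 * B * (\<Sum>n. inverse (real n ^ 2))"
  proof (rule norm_prod_inverse_one_minus_sub_one_le)
    show f_le: "norm (1 - f r) \<le> B / real r ^ 2" if "r \<in> T" for r
      using tail_le that by (auto simp: f_def T_def)
    show "norm (1 - f r) \<le> 1 / 2" if "r \<in> T" for r
    proof -
      have "real r ^ 2 \<ge> 1" "r > 0" using that by (auto simp: T_def)
      then have "B / real r ^ 2 \<le> B"
        using divide_left_mono[of 1 "real r ^ 2" B] \<open>0 \<le> B\<close> by simp
      then show ?thesis using f_le[OF that] \<open>B \<le> 1 / 2\<close> by linarith
    qed
    have "(\<Sum>r\<in>T. inverse (real r ^ 2)) \<le> (\<Sum>n. inverse (real n ^ 2))"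
      using inverse_power_summable[of 2] by (intro sum_le_suminf) (auto simp: T_def)
    then show "(\<Sum>r\<in>T. 1 / real r ^ 2) \<le> (\<Sum>n. inverse (real n ^ 2))"
      by (simp add: inverse_eq_divide)
  qed (use assms in \<open>auto simp: T_def\<close>)
  then have "norm ((\<Prod>r\<in>F. f r) * (\<Prod>r | prime r \<and> r \<le> x. inverse (f r)) - 1)
      \<le> 4 * B * (\<Sum>n. inverse (real n ^ 2))"
    unfolding eq .
  then show ?thesis by (simp add: f_def F_def)
qed

lemma partial_euler_product_approx:
  assumes "M \<ge> 1"
  obtains K m0 where "\<And>m. m \<ge> m0 \<Longrightarrow>
     norm ((\<Prod>r | prime r \<and> r \<le> M. euler_factor c N r (1 / of_nat r ^ m))
           * (\<Sum>n. a (Suc n) / of_nat (Suc n) ^ m) - 1) \<le> K / (real M + 1) ^ m"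
proof -
  define q where "q = real M + 1"
  define K0 where "K0 = real N * 2 ^ N * q ^ (N + 2)"
  define Z where "Z = (\<Sum>n. inverse (real n ^ 2))"
  have q: "q > 1" using \<open>M \<ge> 1\<close> by (simp add: q_def)
  have "(\<lambda>m. K0 * (1 / q) ^ m) \<longlonglongrightarrow> K0 * 0"
    using q by (intro tendsto_intros LIMSEQ_power_zero) auto
  then have lim: "(\<lambda>m. K0 / q ^ m) \<longlonglongrightarrow> 0"
    by (simp add: power_one_over)
  have lim2: "(\<lambda>m. 2 * (K0 / q ^ m) * Z) \<longlonglongrightarrow> 0"
    using tendsto_mult_right[OF tendsto_mult_left[OF lim, of 2], of Z] by simp
  have "eventually (\<lambda>m. K0 / q ^ m < 1 / 2 \<and> 2 * (K0 / q ^ m) * Z < 1 / 2) sequentially"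
    by (intro eventually_conj order_tendstoD(2)[OF lim] order_tendstoD(2)[OF lim2]) simp_all
  then obtain m0 where m0: "\<And>m. m \<ge> m0 \<Longrightarrow> K0 / q ^ m < 1 / 2 \<and> 2 * (K0 / q ^ m) * Z < 1 / 2"
    unfolding eventually_sequentially by blast
  show ?thesis
  proof (rule that[of "max m0 (N + 2)" "4 * K0 * Z"])
    fix m assume m: "max m0 (N + 2) \<le> m"
    define E where "E = (\<Prod>r | prime r \<and> r \<le> M. euler_factor c N r (1 / of_nat r ^ m))"
    define P where "P x = (\<Prod>r | prime r \<and> r \<le> x. inverse (euler_factor c N r (1 / of_nat r ^ m)))"
      for x
    have "norm (E * P x - 1) \<le> 4 * (K0 / q ^ m) * Z" if "M \<le> x" for x
      unfolding E_def P_def Z_def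
    proof (rule partial_euler_products_close)
      show "norm (1 - euler_factor c N r (1 / of_nat r ^ m)) \<le> K0 / q ^ m / real r ^ 2"
        if "prime r" "M < r" for r
        using that m coeff_le q unfolding K0_def
        by (intro norm_one_minus_euler_factor_le) (auto simp: q_def)
    qed (use m m0[of m] q that in \<open>auto simp: K0_def Z_def\<close>)
    then have ev: "eventually (\<lambda>x. norm (E * P x - 1) \<le> 4 * K0 * Z / q ^ m) sequentially"
      unfolding eventually_at_top_linorder by (intro exI[of _ M]) simp
    have lim: "(\<lambda>x. norm (E * P x - 1)) \<longlonglongrightarrow> norm (E * (\<Sum>n. a (Suc n) / of_nat (Suc n) ^ m) - 1)"
      using m tendsto[of m] unfolding P_def by (intro tendsto_intros) auto
    show "norm (E * (\<Sum>n. a (Suc n) / of_nat (Suc n) ^ m) - 1) \<le> 4 * K0 * Z / (real M + 1) ^ m"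
      using lim ev unfolding q_def by (rule tendsto_upperbound) simp
  qed
qed

lemma partial_euler_product_coeffs:
  fixes M n :: nat
  assumes n: "1 \<le> n" "n \<le> M"
  defines "F \<equiv> {r. prime r \<and> r \<le> M}"
  shows "(\<Sum>x | x \<in> {1..M} \<times> PiE F (\<lambda>_. {..N}) \<and> fst x * (\<Prod>r\<in>F. r ^ snd x r) = n.
            a (fst x) * (\<Prod>r\<in>F. euler_coeff c r (snd x r))) = (if n = 1 then 1 else 0)"
proof -
  define q where "q = real M + 1"
  define Ks where "Ks = PiE F (\<lambda>_. {..N})"
  define e where "e k = (\<Prod>r\<in>F. euler_coeff c r (k r))" for k :: "nat \<Rightarrow> nat"
  define \<nu> where "\<nu> k = (\<Prod>r\<in>F. r ^ k r)" for k :: "nat \<Rightarrow> nat"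
  define E where "E m = (\<Prod>r\<in>F. euler_factor c N r (1 / of_nat r ^ m))" for m :: nat
  define D where "D m = (\<Sum>n. a (Suc n) / of_nat (Suc n) ^ m)" for m :: nat
  define A where "A m = (\<Sum>j\<in>{1..M}. a j / of_nat j ^ m)" for m :: nat
  define C where "C = (\<Sum>k\<in>Ks. norm (e k))"
  define Z where "Z = (\<Sum>n. norm (a (Suc n) / of_nat (Suc n) ^ 2))"
  have \<nu>_pos: "\<nu> k > 0" for k
    by (auto simp: \<nu>_def F_def prime_gt_0_nat intro!: prod_pos)
  have E_eq: "E m = (\<Sum>k\<in>Ks. e k / of_nat (\<nu> k) ^ m)" for m
    unfolding E_def e_def \<nu>_def Ks_def by (rule prod_euler_factor_eq_sum_PiE) (simp add: F_def)
  have "M \<ge> 1" using n by simp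
  then obtain K1 m1 where "\<And>m. m \<ge> m1 \<Longrightarrow>
     norm ((\<Prod>r | prime r \<and> r \<le> M. euler_factor c N r (1 / of_nat r ^ m))
           * (\<Sum>n. a (Suc n) / of_nat (Suc n) ^ m) - 1) \<le> K1 / (real M + 1) ^ m"
    using partial_euler_product_approx by blast
  then have approx: "norm (E m * D m - 1) \<le> K1 / q ^ m" if "m \<ge> m1" for m
    using that unfolding E_def D_def F_def q_def by blast
  have bound: "norm ((\<Sum>x\<in>{1..M} \<times> Ks. a (fst x) * e (snd x) / of_nat (fst x * \<nu> (snd x)) ^ m) - 1)
      \<le> (K1 + C * Z * q ^ 2) / q ^ m" if m: "max m1 2 \<le> m" for m
  proof -
    have "(\<Sum>x\<in>{1..M} \<times> Ks. a (fst x) * e (snd x) / of_nat (fst x * \<nu> (snd x)) ^ m) - 1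
        = (E m * D m - 1) - E m * (D m - A m)"
      unfolding dirichlet_poly_mult[symmetric] A_def[symmetric] E_eq[symmetric] by (simp add: algebra_simps)
    also have "norm \<dots> \<le> norm (E m * D m - 1) + norm (E m) * norm (D m - A m)"
      by (metis norm_mult norm_triangle_ineq4)
    also have "\<dots> \<le> K1 / q ^ m + C * (Z * q ^ 2 / q ^ m)"
    proof (intro add_mono mult_mono)
      show "norm (E m) \<le> C"
        unfolding E_eq C_def using \<nu>_pos by (rule norm_dirichlet_poly_le)
      show "norm (D m - A m) \<le> Z * q ^ 2 / q ^ m"
        using norm_dirichlet_series_sub_partial_sum_le[OF summable_2, of m M] m
        by (simp add: D_def A_def Z_def q_def)
    qed (use approx m in \<open>auto simp: C_def intro: sum_nonneg\<close>)
    also have "\<dots> = (K1 + C * Z * q ^ 2) / q ^ m"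
      by (simp add: add_divide_distrib)
    finally show ?thesis .
  qed
  have "(\<Sum>x | x \<in> {1..M} \<times> Ks \<and> fst x * \<nu> (snd x) = n. a (fst x) * e (snd x))
      = (if n = 1 then 1 else 0)"
  proof (rule dirichlet_poly_fiber_sums)
    show "finite ({1..M} \<times> Ks)" by (simp add: Ks_def F_def finite_PiE)
    show "fst x * \<nu> (snd x) > 0" if "x \<in> {1..M} \<times> Ks" for x
      using that \<nu>_pos by auto
    show "norm ((\<Sum>x\<in>{1..M} \<times> Ks. a (fst x) * e (snd x) / of_nat (fst x * \<nu> (snd x)) ^ m) - 1)
      \<le> (K1 + C * Z * q ^ 2) / q ^ m" if "max m1 2 \<le> m" for m
      using bound[OF that] .
    show "real n < q" using n by (simp add: q_def)
  qed (use n in simp)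
  then show ?thesis by (simp add: Ks_def e_def \<nu>_def)
qed

lemma prime_power_coeff_recursion:
  assumes p: "prime p" and "i \<le> N"
  shows "(\<Sum>t\<le>i. euler_coeff c p t * a (p ^ (i - t))) = (if i = 0 then 1 else 0)"
proof -
  define M where "M = p ^ Suc i"
  define F where "F = {r. prime r \<and> r \<le> M}"
  have p2: "p \<ge> 2" using p by (rule prime_ge_2_nat)
  have "finite F" by (simp add: F_def)
  have "p \<in> F" using p p2 by (simp add: F_def M_def)
  have "p ^ i \<le> M" "1 \<le> p ^ i" using p2 by (simp_all add: M_def)
  have prime_F: "\<And>r. r \<in> F \<Longrightarrow> prime r" by (simp add: F_def)
  have coeff_\<kappa>: "(\<Prod>r\<in>F. euler_coeff c r (if r = p then t else 0)) = euler_coeff c p t" for t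
  proof -
    have "(\<Prod>r\<in>F. euler_coeff c r (if r = p then t else 0))
        = (\<Prod>r\<in>F. if r = p then euler_coeff c p t else 1)"
      by (intro prod.cong) (auto simp: euler_coeff_def)
    then show ?thesis using \<open>finite F\<close> \<open>p \<in> F\<close> by simp
  qed
  have "(if p ^ i = 1 then 1 else 0)
      = (\<Sum>x | x \<in> {1..M} \<times> PiE F (\<lambda>_. {..N}) \<and> fst x * (\<Prod>r\<in>F. r ^ snd x r) = p ^ i.
            a (fst x) * (\<Prod>r\<in>F. euler_coeff c r (snd x r)))"
    unfolding F_def by (rule partial_euler_product_coeffs[symmetric]) fact+
  also have "\<dots> = (\<Sum>t\<le>i. a (p ^ (i - t)) * euler_coeff c p t)"
    using sum_prime_power_fiber[OF \<open>finite F\<close> prime_F \<open>p \<in> F\<close> \<open>i \<le> N\<close> \<open>p ^ i \<le> M\<close>,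
        where g = "\<lambda>x. a (fst x) * (\<Prod>r\<in>F. euler_coeff c r (snd x r))"]
    by (simp add: coeff_\<kappa> cong: prod.cong)
  finally show ?thesis
    using p2 by (simp add: mult.commute)
qed

end

lemma of_nat_powr_neg_of_nat:
  assumes "r > 0"
  shows "(of_nat r :: complex) powr (- of_nat m) = 1 / of_nat r ^ m"
  using assms by (simp only: powr_minus_divide powr_nat') simp

lemma selberg_integer_euler_product:
  assumes selberg: "selberg_class a" and euler: "euler_product_rank a N c"
  shows "integer_euler_product a c N"
proof
  have summable: "summable (\<lambda>n. norm (a (Suc n) * of_nat (Suc n) powr (- s)))" if "Re s > 1" for s
    using selberg that unfolding selberg_class_def by blast
  have L_nonzero: "dirichlet_L a s \<noteq> 0" if "Re s > 1" for s
  proof -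
    obtain b where "\<forall>s. Re s > 1 \<longrightarrow> dirichlet_L a s = exp (\<Sum>n. b (Suc n) * of_nat (Suc n) powr (- s))"
      using selberg unfolding selberg_class_def by blast
    then show ?thesis using that by simp
  qed
  show "summable (\<lambda>n. norm (a (Suc n) / of_nat (Suc n) ^ 2))"
    using summable[of 2] by (simp add: of_nat_powr_neg_of_nat[of _ 2, simplified] divide_inverse
                                 del: of_nat_Suc)
  show tendsto: "(\<lambda>x. \<Prod>r | prime r \<and> r \<le> x. inverse (euler_factor c N r (1 / of_nat r ^ m)))
        \<longlonglongrightarrow> (\<Sum>n. a (Suc n) / of_nat (Suc n) ^ m)" if "m \<ge> 2" for m
  proof -
    have "(\<lambda>x. \<Prod>r | prime r \<and> r \<le> x. inverse (euler_factor c N r (of_nat r powr - of_nat m)))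
        \<longlonglongrightarrow> dirichlet_L a (of_nat m)"
      using that by (intro euler_product_rank_tendsto[OF euler]) simp
    moreover have "dirichlet_L a (of_nat m) = (\<Sum>n. a (Suc n) / of_nat (Suc n) ^ m)"
      unfolding dirichlet_L_def
      by (simp add: of_nat_powr_neg_of_nat divide_inverse del: of_nat_Suc)
    moreover have "(\<lambda>x. \<Prod>r | prime r \<and> r \<le> x. inverse (euler_factor c N r (of_nat r powr - of_nat m)))
        = (\<lambda>x. \<Prod>r | prime r \<and> r \<le> x. inverse (euler_factor c N r (1 / of_nat r ^ m)))"
      by (intro ext prod.cong refl) (simp add: of_nat_powr_neg_of_nat prime_gt_0_nat)
    ultimately show ?thesis by simp
  qed
  show "euler_factor c N r (1 / of_nat r ^ m) \<noteq> 0" if "prime r" "m \<ge> 2" for r m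
  proof -
    have "euler_factor c N r (of_nat r powr - of_nat m) \<noteq> 0"
      by (rule prime_prod_inverse_factor_nonzero[OF euler_product_rank_tendsto[OF euler]
            L_nonzero \<open>prime r\<close>]) (use that in simp_all)
    then show ?thesis
      by (simp add: of_nat_powr_neg_of_nat prime_gt_0_nat \<open>prime r\<close>)
  qed
  show "norm (c l r) \<le> (1 + real r) ^ N" if "prime r" "l \<in> {1..N}" for r l
    using euler_product_coeff_bound[OF euler L_nonzero that] by blast
qed

lemma selberg_euler_coeff_2:
  assumes "selberg_class a" and "euler_product_rank a N c" and "N \<ge> 2" and p: "prime p"
  shows "c 2 p = a (p ^ 2) - a p ^ 2"
proof -
  interpret integer_euler_product a c N
    by (rule selberg_integer_euler_product[OF assms(1,2)])
  have rec: "(\<Sum>t\<le>i. euler_coeff c p t * a (p ^ (i - t))) = (if i = 0 then 1 else 0)" if "i \<le> 2" for i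
    using prime_power_coeff_recursion[OF p] that \<open>N \<ge> 2\<close> by simp
  have "a 1 = 1" using rec[of 0] by (simp add: euler_coeff_def)
  moreover have "a p - c 1 p * a 1 = 0" using rec[of 1] by (simp add: euler_coeff_def)
  moreover have "a (p ^ 2) - c 1 p * a p - c 2 p * a 1 = 0"
    using rec[of 2] by (simp add: euler_coeff_def numeral_2_eq_2)
  ultimately show ?thesis
    by (simp add: power2_eq_square)
qed

lemma selberg_euler_coeff_2_bound:
  assumes "selberg_class a" and "euler_product_rank a N c" and "N \<ge> 2" and "\<delta> > 0"
  shows "\<exists>C\<ge>0. \<forall>p. prime p \<longrightarrow> norm (c 2 p) \<le> C * real p powr \<delta>"
proof -
  obtain C where C: "\<And>n. n \<ge> 1 \<Longrightarrow> norm (a n) \<le> C * real n powr (\<delta> / 2)"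
    using assms(1,4) unfolding selberg_class_def by (meson half_gt_zero)
  have "C \<ge> 0" using C[of 1] by (simp add: order_trans[OF norm_ge_zero])
  have "norm (c 2 p) \<le> (C + C ^ 2) * real p powr \<delta>" if p: "prime p" for p
  proof -
    have p_pos: "real p > 0" using prime_gt_0_nat[OF p] by simp
    have "norm (c 2 p) \<le> norm (a (p ^ 2)) + norm (a p) ^ 2"
      unfolding selberg_euler_coeff_2[OF assms(1-3) p] by (metis norm_power norm_triangle_ineq4)
    also have "norm (a (p ^ 2)) \<le> C * real (p ^ 2) powr (\<delta> / 2)"
      using C[of "p ^ 2"] p_pos by (simp add: Suc_le_eq)
    also have "real (p ^ 2) powr (\<delta> / 2) = real p powr \<delta>"
      using p_pos by (simp add: powr_mult powr_add[symmetric] power2_eq_square)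
    also have "norm (a p) ^ 2 \<le> (C * real p powr (\<delta> / 2)) ^ 2"
      using C[of p] p_pos by (intro power_mono) auto
    also have "(C * real p powr (\<delta> / 2)) ^ 2 = C ^ 2 * real p powr \<delta>"
      using p_pos by (simp add: power_mult_distrib powr_realpow[symmetric] powr_powr)
    finally show ?thesis by (simp add: algebra_simps)
  qed
  then show ?thesis
    using \<open>C \<ge> 0\<close> by (intro exI[of _ "C + C ^ 2"]) auto
qed

section \<open>Smoothed sums\<close>

lemma ln_le_powr_divide:
  fixes x e :: real
  assumes "x \<ge> 1" and "e > 0"
  shows "ln x \<le> x powr e / e"
proof -
  have "ln (x powr e) \<le> x powr e - 1"
    using assms by (intro ln_le_minus_one) simp
  then have "e * ln x \<le> x powr e"
    using assms by simp
  then show ?thesis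
    using assms by (simp add: field_simps)
qed

lemma sqrt_divide_powr:
  fixes x \<beta> e :: real
  assumes "x > 0" and "\<beta> > 0"
  shows "sqrt (\<beta> / x) powr e = \<beta> powr (e / 2) * x powr (- e / 2)"
proof -
  have "sqrt (\<beta> / x) powr e = ((\<beta> / x) powr (1 / 2)) powr e"
    using assms by (subst powr_half_sqrt) auto
  also have "\<dots> = (\<beta> / x) powr (e / 2)"
    by (simp add: powr_powr)
  also have "\<dots> = \<beta> powr (e / 2) / x powr (e / 2)"
    using assms by (simp add: powr_divide)
  also have "x powr (e / 2) = 1 / x powr (- e / 2)"
    using powr_minus_divide[of x "e / 2"] by simp
  also have "\<beta> powr (e / 2) / (1 / x powr (- e / 2)) = \<beta> powr (e / 2) * x powr (- e / 2)"
    by simp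
  finally show ?thesis .
qed

lemma C0inf_support:
  assumes "C0inf h"
  obtains \<alpha> \<beta> where "0 < \<alpha>" "\<alpha> \<le> \<beta>" "\<And>y. y > 0 \<Longrightarrow> y \<notin> {\<alpha>..\<beta>} \<Longrightarrow> h y = 0"
  using assms unfolding C0inf_def by blast

lemma C0inf_has_vector_derivative:
  assumes "C0inf h" and "y > 0"
  shows "(h has_vector_derivative vector_derivative h (at y)) (at y)"
proof -
  have "vderiv_iter 0 h differentiable (at y)"
    using assms unfolding C0inf_def smooth_on_def by simp
  then show ?thesis
    by (simp add: vderiv_iter_def vector_derivative_works)
qed

lemma C0inf_isCont_derivative:
  assumes "C0inf h" and "y > 0"
  shows "isCont (\<lambda>y. vector_derivative h (at y)) y"
proof -
  have "vderiv_iter 1 h differentiable (at y)"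
    using assms unfolding C0inf_def smooth_on_def by simp
  then show ?thesis
    by (simp add: vderiv_iter_def differentiable_imp_continuous_within)
qed

lemma C0inf_bounded:
  assumes "C0inf h"
  obtains H where "H \<ge> 0" "\<And>y. y > 0 \<Longrightarrow> norm (h y) \<le> H"
proof -
  obtain \<alpha> \<beta> where "0 < \<alpha>" and vanish: "\<And>y. y > 0 \<Longrightarrow> y \<notin> {\<alpha>..\<beta>} \<Longrightarrow> h y = 0"
    using C0inf_support[OF assms] by blast
  have "continuous_on {\<alpha>..\<beta>} h"
    using \<open>0 < \<alpha>\<close>
    by (intro continuous_at_imp_continuous_on ballI
          has_vector_derivative_continuous[OF C0inf_has_vector_derivative[OF assms]]) auto
  then obtain H where "H \<ge> 0" and H: "\<And>y. y \<in> {\<alpha>..\<beta>} \<Longrightarrow> norm (h y) \<le> H"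
    using continuous_on_compact_bound[OF compact_Icc] by blast
  show ?thesis
  proof (rule that[OF \<open>H \<ge> 0\<close>])
    show "norm (h y) \<le> H" if "y > 0" for y
      using H vanish[OF that] \<open>H \<ge> 0\<close> by (cases "y \<in> {\<alpha>..\<beta>}") auto
  qed
qed

lemma norm_smoothed_sum_le:
  fixes w :: "nat \<Rightarrow> complex" and h :: "real \<Rightarrow> complex" and C \<delta> H x \<beta> :: real
  assumes w_le: "\<And>n. norm (w n) \<le> C * real n powr \<delta>" and "C \<ge> 0" and "\<delta> \<ge> 0"
    and H: "\<And>y. y > 0 \<Longrightarrow> norm (h y) \<le> H" and "H \<ge> 0"
    and vanish: "\<And>y. y > \<beta> \<Longrightarrow> h y = 0" and x: "0 < x" "x \<le> \<beta>"
  shows "norm (\<Sum>n. w n * h (x * real n ^ 2)) \<le> 2 * C * H * sqrt (\<beta> / x) powr (1 + \<delta>)"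
proof -
  define R where "R = sqrt (\<beta> / x)"
  have R: "R \<ge> 1" "x * R ^ 2 = \<beta>" using x by (auto simp: R_def)
  have "(\<Sum>n. w n * h (x * real n ^ 2)) = (\<Sum>n\<le>nat \<lfloor>R\<rfloor>. w n * h (x * real n ^ 2))"
  proof (rule suminf_finite)
    fix n assume "n \<notin> {..nat \<lfloor>R\<rfloor>}"
    then have "R < real n" by (meson atMost_iff le_nat_floor not_le)
    then have "R ^ 2 < real n ^ 2"
      using R by (intro power_strict_mono) auto
    then have "x * R ^ 2 < x * real n ^ 2"
      using x by simp
    then have "\<beta> < x * real n ^ 2"
      using R by simp
    then show "w n * h (x * real n ^ 2) = 0" using vanish x by simp
  qed simp
  also have "norm \<dots> \<le> (\<Sum>n\<le>nat \<lfloor>R\<rfloor>. C * R powr \<delta> * H)"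
  proof (rule order.trans[OF norm_sum sum_mono])
    fix n assume "n \<in> {..nat \<lfloor>R\<rfloor>}"
    then have "real n \<le> R" using R by (auto simp: le_nat_iff le_floor_iff)
    show "norm (w n * h (x * real n ^ 2)) \<le> C * R powr \<delta> * H"
    proof (cases "n = 0")
      case True
      then show ?thesis using w_le[of 0] \<open>C \<ge> 0\<close> \<open>H \<ge> 0\<close> by simp
    next
      case False
      have "real n powr \<delta> \<le> R powr \<delta>"
        using \<open>real n \<le> R\<close> \<open>\<delta> \<ge> 0\<close> by (intro powr_mono2) auto
      then have "norm (w n) \<le> C * R powr \<delta>"
        using w_le[of n] \<open>C \<ge> 0\<close> by (meson mult_left_mono order.trans)
      then show ?thesis
        unfolding norm_mult using H[of "x * real n ^ 2"] x False \<open>C \<ge> 0\<close>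
        by (intro mult_mono) auto
    qed
  qed
  also have "\<dots> = real (Suc (nat \<lfloor>R\<rfloor>)) * (C * R powr \<delta> * H)"
    by simp
  also have "\<dots> \<le> 2 * R * (C * R powr \<delta> * H)"
  proof (rule mult_right_mono)
    have "real (nat \<lfloor>R\<rfloor>) \<le> R" using R by linarith
    then show "real (Suc (nat \<lfloor>R\<rfloor>)) \<le> 2 * R" using R by (simp only: of_nat_Suc)
  qed (use \<open>C \<ge> 0\<close> \<open>H \<ge> 0\<close> R in simp)
  also have "\<dots> = 2 * C * H * R powr (1 + \<delta>)"
    using R by (simp add: powr_add)
  finally show ?thesis unfolding R_def .
qed

lemma smoothed_sum_bigo:
  fixes w :: "nat \<Rightarrow> complex" and h :: "real \<Rightarrow> complex" and C \<delta> :: real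
  assumes "C0inf h" and w_le: "\<And>n. norm (w n) \<le> C * real n powr \<delta>" and "\<delta> \<ge> 0"
  shows "(\<lambda>x. \<Sum>n. w n * h (x * real n ^ 2)) \<in> O[at_right 0](\<lambda>x. of_real (x powr (- (1 + \<delta>) / 2)))"
proof -
  obtain \<alpha> \<beta> where "0 < \<alpha>" "\<alpha> \<le> \<beta>" and vanish: "\<And>y. y > 0 \<Longrightarrow> y \<notin> {\<alpha>..\<beta>} \<Longrightarrow> h y = 0"
    using C0inf_support[OF assms(1)] by blast
  obtain H where "H \<ge> 0" and H: "\<And>y. y > 0 \<Longrightarrow> norm (h y) \<le> H"
    using C0inf_bounded[OF assms(1)] by blast
  have "C \<ge> 0" using w_le[of 1] by (simp add: order_trans[OF norm_ge_zero])
  have "eventually (\<lambda>x. norm (\<Sum>n. w n * h (x * real n ^ 2))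
      \<le> 2 * C * H * \<beta> powr ((1 + \<delta>) / 2) * norm (of_real (x powr (- (1 + \<delta>) / 2)) :: complex))
      (at_right 0)"
    unfolding eventually_at_right_field
  proof (intro exI[of _ \<beta>] conjI allI impI)
    show "0 < \<beta>" using \<open>0 < \<alpha>\<close> \<open>\<alpha> \<le> \<beta>\<close> by simp
    fix x :: real assume x: "0 < x" "x < \<beta>"
    have "norm (\<Sum>n. w n * h (x * real n ^ 2)) \<le> 2 * C * H * sqrt (\<beta> / x) powr (1 + \<delta>)"
      using x vanish \<open>0 < \<alpha>\<close>
      by (intro norm_smoothed_sum_le[OF w_le \<open>C \<ge> 0\<close> \<open>\<delta> \<ge> 0\<close> H \<open>H \<ge> 0\<close>]) auto
    also have "\<dots> = 2 * C * H * \<beta> powr ((1 + \<delta>) / 2) * norm (of_real (x powr (- (1 + \<delta>) / 2)) :: complex)"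
      using x \<open>0 < \<alpha>\<close> \<open>\<alpha> \<le> \<beta>\<close> by (simp add: sqrt_divide_powr)
    finally show "norm (\<Sum>n. w n * h (x * real n ^ 2))
      \<le> 2 * C * H * \<beta> powr ((1 + \<delta>) / 2) * norm (of_real (x powr (- (1 + \<delta>) / 2)) :: complex)" .
  qed
  then show ?thesis by (rule bigoI)
qed

lemma finite_nat_le_real: "finite {n::nat. real n \<le> b}"
  by (rule finite_subset[of _ "{..nat \<lfloor>b\<rfloor>}"]) (auto simp: le_nat_floor)

lemma has_integral_step_times_deriv:
  fixes g g' :: "real \<Rightarrow> complex"
  assumes "a \<le> b"
    and deriv: "\<And>t. t \<in> {a..b} \<Longrightarrow> (g has_vector_derivative g' t) (at t)"
    and "g a = 0" and "g b = 0" and "s \<le> b" and below: "s < a \<Longrightarrow> c * g s = 0"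
  shows "((\<lambda>t. (if s \<le> t then c else 0) * g' t) has_integral - (c * g s)) {a..b}"
proof -
  have ftc: "(g' has_integral (g v - g u)) {u..v}" if "a \<le> u" "u \<le> v" "v \<le> b" for u v
    using that deriv
    by (intro fundamental_theorem_of_calculus) (auto intro: has_vector_derivative_at_within)
  show ?thesis
  proof (cases "s \<le> a")
    case True
    have "c * (g b - g a) = - (c * g s)"
      using below True \<open>g a = 0\<close> \<open>g b = 0\<close> by (cases "s = a") auto
    then have "((\<lambda>t. c * g' t) has_integral - (c * g s)) {a..b}"
      using has_integral_mult_right[OF ftc[OF order.refl \<open>a \<le> b\<close> order.refl], of c] by simp
    then show ?thesis
      by (rule has_integral_eq[rotated]) (use True in auto)
  next
    case False
    have "((\<lambda>t. c * g' t) has_integral (c * (g b - g s))) (cbox s b)"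
      using has_integral_mult_right[OF ftc, of s b c] False \<open>s \<le> b\<close> by simp
    then have "((\<lambda>t. if t \<in> cbox s b then c * g' t else 0) has_integral (c * (g b - g s))) (cbox a b)"
      by (rule has_integral_restrict_closed_subinterval) (use False \<open>s \<le> b\<close> in auto)
    then have "((\<lambda>t. if t \<in> cbox s b then c * g' t else 0) has_integral - (c * g s)) {a..b}"
      using \<open>g b = 0\<close> by (simp add: cbox_interval)
    then show ?thesis
      by (rule has_integral_eq[rotated]) auto
  qed
qed

lemma abel_summation_vanishing_ends:
  fixes w :: "nat \<Rightarrow> complex" and g g' :: "real \<Rightarrow> complex"
  assumes "a \<le> b"
    and deriv: "\<And>t. t \<in> {a..b} \<Longrightarrow> (g has_vector_derivative g' t) (at t)"
    and "g a = 0" and "g b = 0"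
    and below: "\<And>n. real n < a \<Longrightarrow> w n * g (real n) = 0"
  shows "((\<lambda>t. (\<Sum>n | real n \<le> t. w n) * g' t)
           has_integral - (\<Sum>n | real n \<le> b. w n * g (real n))) {a..b}"
proof -
  define Nb where "Nb = {n. real n \<le> b}"
  have "((\<lambda>t. \<Sum>n\<in>Nb. (if real n \<le> t then w n else 0) * g' t) has_integral
          (\<Sum>n\<in>Nb. - (w n * g (real n)))) {a..b}"
    using finite_nat_le_real below
    by (intro has_integral_sum has_integral_step_times_deriv[OF \<open>a \<le> b\<close> deriv \<open>g a = 0\<close> \<open>g b = 0\<close>])
       (auto simp: Nb_def)
  then have "((\<lambda>t. \<Sum>n\<in>Nb. (if real n \<le> t then w n else 0) * g' t) has_integral
          - (\<Sum>n | real n \<le> b. w n * g (real n))) {a..b}"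
    unfolding sum_negf Nb_def .
  moreover have "(\<Sum>n\<in>Nb. (if real n \<le> t then w n else 0) * g' t) = (\<Sum>n | real n \<le> t. w n) * g' t"
    if "t \<in> {a..b}" for t
  proof -
    have "{n. real n \<le> t} = {n \<in> Nb. real n \<le> t}" using that by (auto simp: Nb_def)
    then have "(\<Sum>n | real n \<le> t. w n) = (\<Sum>n\<in>Nb. if real n \<le> t then w n else 0)"
      by (simp only:) (rule sum.inter_filter, simp add: Nb_def finite_nat_le_real)
    then show ?thesis
      by (simp add: sum_distrib_right)
  qed
  ultimately show ?thesis
    by (rule has_integral_eq[rotated]) auto
qed

lemma continuous_on_mult_powr_divide:
  fixes g :: "real \<Rightarrow> complex" and \<mu> :: complex
  assumes "0 < a" and "\<And>t. t \<in> {a..b} \<Longrightarrow> isCont g t"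
  shows "continuous_on {a..b} (\<lambda>t. g t * of_real t powr \<mu> / of_real t)"
proof (intro continuous_at_imp_continuous_on ballI)
  fix t assume t: "t \<in> {a..b}"
  then have "t > 0" using \<open>0 < a\<close> by auto
  then have "(of_real t :: complex) \<notin> \<real>\<^sub>\<le>\<^sub>0" by simp
  from has_field_derivative_powr[OF this, of \<mu>]
  have "isCont (\<lambda>t. of_real t powr \<mu> :: complex) t"
    by (intro has_vector_derivative_continuous has_vector_derivative_real_field)
  then show "isCont (\<lambda>t. g t * of_real t powr \<mu> / of_real t) t"
    using assms(2)[OF t] \<open>t > 0\<close> by (intro continuous_intros) auto
qed

lemma has_integral_powr_mult_deriv:
  fixes g g' :: "real \<Rightarrow> complex" and \<mu> :: complex
  assumes "0 < a" and "a \<le> b"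
    and deriv: "\<And>t. t \<in> {a..b} \<Longrightarrow> (g has_vector_derivative g' t) (at t)"
    and "g a = 0" and "g b = 0"
  shows "((\<lambda>t. of_real t powr \<mu> * g' t) has_integral
           - \<mu> * integral {a..b} (\<lambda>t. g t * of_real t powr \<mu> / of_real t)) {a..b}"
proof -
  define f where "f t = (of_real t powr \<mu> :: complex)" for t
  define f' where "f' t = \<mu> * (of_real t powr \<mu> / of_real t :: complex)" for t
  have f_deriv: "(f has_vector_derivative f' t) (at t within S)" if "t > 0" for t S
  proof -
    have "(of_real t :: complex) \<notin> \<real>\<^sub>\<le>\<^sub>0" using that by simp
    from has_field_derivative_powr[OF this, of \<mu>]
    have "(f has_vector_derivative \<mu> * of_real t powr (\<mu> - 1)) (at t within S)"
      unfolding f_def by (rule has_vector_derivative_real_field)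
    moreover have "of_real t powr (\<mu> - 1) = (of_real t powr \<mu> / of_real t :: complex)"
      using that by (simp add: powr_diff)
    ultimately show ?thesis by (simp add: f'_def)
  qed
  have "((\<lambda>t. f t * g t) has_vector_derivative (f t * g' t + f' t * g t)) (at t within {a..b})"
    if t: "t \<in> {a..b}" for t
    using t \<open>0 < a\<close>
    by (intro has_vector_derivative_mult f_deriv has_vector_derivative_at_within[OF deriv]) auto
  then have "((\<lambda>t. f t * g' t + f' t * g t) has_integral (f b * g b - f a * g a)) {a..b}"
    by (rule fundamental_theorem_of_calculus[OF \<open>a \<le> b\<close>])
  moreover have "continuous_on {a..b} (\<lambda>t. g t * of_real t powr \<mu> / of_real t)"
    using \<open>0 < a\<close> deriv by (intro continuous_on_mult_powr_divide has_vector_derivative_continuous)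
  then have "((\<lambda>t. \<mu> * (g t * of_real t powr \<mu> / of_real t)) has_integral
               \<mu> * integral {a..b} (\<lambda>t. g t * of_real t powr \<mu> / of_real t)) {a..b}"
    by (intro has_integral_mult_right integrable_integral integrable_continuous_interval)
  ultimately have "((\<lambda>t. (f t * g' t + f' t * g t) - \<mu> * (g t * of_real t powr \<mu> / of_real t))
      has_integral (f b * g b - f a * g a) - \<mu> * integral {a..b} (\<lambda>t. g t * of_real t powr \<mu> / of_real t))
      {a..b}"
    by (rule has_integral_diff)
  then have "((\<lambda>t. (f t * g' t + f' t * g t) - \<mu> * (g t * of_real t powr \<mu> / of_real t))
      has_integral - \<mu> * integral {a..b} (\<lambda>t. g t * of_real t powr \<mu> / of_real t)) {a..b}"
    using \<open>g a = 0\<close> \<open>g b = 0\<close> by simp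
  then show ?thesis
    by (rule has_integral_eq[rotated]) (simp add: f_def f'_def algebra_simps)
qed

lemma abel_sum_sub_integral_bound:
  fixes w :: "nat \<Rightarrow> complex" and g g' :: "real \<Rightarrow> complex" and A \<mu> :: complex
  assumes "0 < a" and "a \<le> b"
    and deriv: "\<And>t. t \<in> {a..b} \<Longrightarrow> (g has_vector_derivative g' t) (at t)"
    and "g a = 0" and "g b = 0"
    and below: "\<And>n. real n < a \<Longrightarrow> w n * g (real n) = 0"
    and bound: "\<And>t. t \<in> {a..b} \<Longrightarrow>
      norm (((\<Sum>n | real n \<le> t. w n) - A * of_real t powr \<mu>) * g' t) \<le> D"
  shows "norm ((\<Sum>n | real n \<le> b. w n * g (real n))
           - \<mu> * A * integral {a..b} (\<lambda>t. g t * of_real t powr \<mu> / of_real t)) \<le> D * (b - a)"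
proof -
  define I where "I = integral {a..b} (\<lambda>t. g t * of_real t powr \<mu> / of_real t)"
  have "((\<lambda>t. (\<Sum>n | real n \<le> t. w n) * g' t - A * (of_real t powr \<mu> * g' t)) has_integral
          - (\<Sum>n | real n \<le> b. w n * g (real n)) - A * (- \<mu> * I)) {a..b}"
    unfolding I_def
    using abel_summation_vanishing_ends[OF \<open>a \<le> b\<close> deriv \<open>g a = 0\<close> \<open>g b = 0\<close> below]
      has_integral_powr_mult_deriv[OF \<open>0 < a\<close> \<open>a \<le> b\<close> deriv \<open>g a = 0\<close> \<open>g b = 0\<close>]
    by (intro has_integral_diff has_integral_mult_right)
  then have "((\<lambda>t. ((\<Sum>n | real n \<le> t. w n) - A * of_real t powr \<mu>) * g' t) has_integral
          - ((\<Sum>n | real n \<le> b. w n * g (real n)) - \<mu> * A * I)) (cbox a b)"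
  proof -
    have "(\<Sum>n | real n \<le> t. w n) * g' t - A * (of_real t powr \<mu> * g' t)
        = ((\<Sum>n | real n \<le> t. w n) - A * of_real t powr \<mu>) * g' t" for t
      by (simp add: algebra_simps)
    moreover have "- (\<Sum>n | real n \<le> b. w n * g (real n)) - A * (- \<mu> * I)
        = - ((\<Sum>n | real n \<le> b. w n * g (real n)) - \<mu> * A * I)"
      by (simp add: algebra_simps)
    ultimately show ?thesis
      using \<open>((\<lambda>t. _) has_integral _) {a..b}\<close> by (simp add: cbox_interval ac_simps)
  qed
  moreover have "D \<ge> 0" using bound[of a] \<open>a \<le> b\<close> by (simp add: order_trans[OF norm_ge_zero])
  ultimately have "norm (- ((\<Sum>n | real n \<le> b. w n * g (real n)) - \<mu> * A * I))
      \<le> D * Henstock_Kurzweil_Integration.content (cbox a b)"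
    using bound by (intro has_integral_bound) auto
  then show ?thesis using \<open>a \<le> b\<close> by (simp add: I_def norm_minus_commute)
qed

lemma has_vector_derivative_rescaled_square:
  fixes h :: "real \<Rightarrow> complex"
  assumes "(h has_vector_derivative h' (x * t ^ 2)) (at (x * t ^ 2))"
  shows "((\<lambda>t. h (x * t ^ 2)) has_vector_derivative of_real (2 * x * t) * h' (x * t ^ 2)) (at t)"
proof -
  have "((\<lambda>t. x * t ^ 2) has_real_derivative (2 * x * t)) (at t)"
    by (auto intro!: derivative_eq_intros)
  then have "((\<lambda>t. x * t ^ 2) has_vector_derivative (2 * x * t)) (at t)"
    by (simp add: has_real_derivative_iff_has_vector_derivative)
  from vector_diff_chain_at[OF this assms] show ?thesis
    by (simp add: o_def scaleR_conv_of_real)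
qed

lemma has_integral_Ioi_of_vanishing:
  fixes f :: "real \<Rightarrow> complex"
  assumes "(f has_integral I) {a..b}" and "0 < a" and "\<And>u. u > 0 \<Longrightarrow> u \<notin> {a..b} \<Longrightarrow> f u = 0"
  shows "(f has_integral I) {0<..}"
proof -
  have "((\<lambda>u. if u \<in> {a..b} then f u else 0) has_integral I) {0<..}"
    using assms(1,2) by (subst has_integral_restrict) auto
  then show ?thesis
    by (rule has_integral_eq[rotated]) (use assms(3) in auto)
qed

lemma rescaled_powr_le:
  fixes x \<beta> b e :: real
  assumes "0 < x" and "0 < \<beta>" and "0 < b" and "b \<le> 2 * sqrt (\<beta> / x)" and "e \<ge> 0"
  shows "x * b powr (2 + e) \<le> 2 powr (2 + e) * \<beta> powr (1 + e / 2) * x powr (- e / 2)"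
proof -
  have "b powr (2 + e) \<le> (2 * sqrt (\<beta> / x)) powr (2 + e)"
    using assms by (intro powr_mono2) auto
  also have "\<dots> = 2 powr (2 + e) * (\<beta> powr ((2 + e) / 2) * x powr (- (2 + e) / 2))"
    using assms by (simp add: powr_mult sqrt_divide_powr)
  finally have "x * b powr (2 + e)
      \<le> 2 powr (2 + e) * \<beta> powr ((2 + e) / 2) * (x powr 1 * x powr (- (2 + e) / 2))"
    using \<open>0 < x\<close> by (simp add: mult_left_mono mult_ac)
  also have "x powr 1 * x powr (- (2 + e) / 2) = x powr (1 + - (2 + e) / 2)"
    by (rule powr_add[symmetric])
  also have "1 + - (2 + e) / 2 = - e / 2"
    by (simp add: field_simps)
  also have "(2 + e) / 2 = 1 + e / 2" by simp
  finally show ?thesis .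
qed

lemma square_rescaling_window:
  fixes x \<alpha> \<beta> :: real
  assumes "0 < \<alpha>" and "\<alpha> \<le> \<beta>" and "0 < x" and "x \<le> 1" and "x \<le> \<beta>"
  defines "a \<equiv> sqrt (\<alpha> / x) / 2" and "b \<equiv> sqrt (\<beta> / x) + 1"
  shows "0 < a" and "a \<le> b" and "b \<le> 2 * sqrt (\<beta> / x)"
    and "\<And>t. t \<in> {a..b} \<Longrightarrow> x * t ^ 2 \<in> {\<alpha> / 4..(sqrt \<beta> + 1) ^ 2}"
    and "\<And>t. t > 0 \<Longrightarrow> t \<le> a \<or> b \<le> t \<Longrightarrow> x * t ^ 2 \<notin> {\<alpha>..\<beta>}"
    and "\<And>T. 0 \<le> T \<Longrightarrow> 4 * T ^ 2 * x \<le> \<alpha> \<Longrightarrow> T \<le> a"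
proof -
  show "0 < a" using assms(1,3) by (simp add: a_def)
  have sqrt_ge: "sqrt (\<beta> / x) \<ge> 1" using assms(3,5) by simp
  have "sqrt (\<alpha> / x) \<le> sqrt (\<beta> / x)"
    using assms(2,3) by (intro real_sqrt_le_mono divide_right_mono) auto
  then show "a \<le> b" "b \<le> 2 * sqrt (\<beta> / x)"
    using sqrt_ge unfolding a_def b_def by linarith+
  have x_a: "x * a ^ 2 = \<alpha> / 4"
    using assms(1,3) by (simp add: a_def power_divide)
  have "sqrt x * b = sqrt \<beta> + sqrt x"
    using assms(3) by (simp add: b_def algebra_simps real_sqrt_divide)
  then have "x * b ^ 2 = (sqrt \<beta> + sqrt x) ^ 2"
    using assms(3) by (metis power_mult_distrib real_sqrt_pow2 less_imp_le)
  moreover have "sqrt \<beta> ^ 2 < (sqrt \<beta> + sqrt x) ^ 2"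
    using assms(1-3) by (intro power_strict_mono) auto
  moreover have "(sqrt \<beta> + sqrt x) ^ 2 \<le> (sqrt \<beta> + 1) ^ 2"
    using assms(1-4) by (intro power_mono) auto
  ultimately have x_b: "\<beta> < x * b ^ 2" "x * b ^ 2 \<le> (sqrt \<beta> + 1) ^ 2"
    using assms(1,2) by simp_all
  show "x * t ^ 2 \<in> {\<alpha> / 4..(sqrt \<beta> + 1) ^ 2}" if "t \<in> {a..b}" for t
  proof -
    have "x * a ^ 2 \<le> x * t ^ 2" "x * t ^ 2 \<le> x * b ^ 2"
      using that \<open>0 < a\<close> assms(3) by (auto intro!: mult_left_mono power_mono)
    then show ?thesis using x_a x_b by auto
  qed
  show "x * t ^ 2 \<notin> {\<alpha>..\<beta>}" if "t > 0" "t \<le> a \<or> b \<le> t" for t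
  proof -
    have "x * t ^ 2 \<le> x * a ^ 2 \<or> x * b ^ 2 \<le> x * t ^ 2"
      using that \<open>0 < a\<close> \<open>a \<le> b\<close> assms(3) by (auto intro!: mult_left_mono power_mono)
    then show ?thesis using x_a x_b assms(1) by auto
  qed
  show "T \<le> a" if "0 \<le> T" "4 * T ^ 2 * x \<le> \<alpha>" for T
  proof -
    have "sqrt (4 * T ^ 2) \<le> sqrt (\<alpha> / x)"
      using that assms(3) by (intro real_sqrt_le_mono) (simp add: field_simps)
    then show ?thesis using that(1) by (simp add: a_def real_sqrt_mult)
  qed
qed

lemma smoothed_sum_sub_integral_le:
  fixes w :: "nat \<Rightarrow> complex" and g g' :: "real \<Rightarrow> complex" and A \<mu> :: complex
  assumes "0 < a" and "a \<le> b" and "w 0 = 0"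
    and deriv: "\<And>t. t \<in> {a..b} \<Longrightarrow> (g has_vector_derivative g' t) (at t)"
    and vanish: "\<And>t. t > 0 \<Longrightarrow> t \<le> a \<or> b \<le> t \<Longrightarrow> g t = 0"
    and bound: "\<And>t. t \<in> {a..b} \<Longrightarrow>
      norm (((\<Sum>n | real n \<le> t. w n) - A * of_real t powr \<mu>) * g' t) \<le> D"
  shows "norm ((\<Sum>n. w n * g (real n))
           - \<mu> * A * integral {0<..} (\<lambda>t. g t * of_real t powr \<mu> / of_real t)) \<le> D * (b - a)"
proof -
  have "(\<Sum>n. w n * g (real n)) = (\<Sum>n | real n \<le> b. w n * g (real n))"
  proof (rule suminf_finite)
    show "w n * g (real n) = 0" if "n \<notin> {n. real n \<le> b}" for n
      using that vanish[of "real n"] \<open>0 < a\<close> \<open>a \<le> b\<close> by auto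
  qed (simp add: finite_nat_le_real)
  moreover have "integral {0<..} (\<lambda>t. g t * of_real t powr \<mu> / of_real t)
      = integral {a..b} (\<lambda>t. g t * of_real t powr \<mu> / of_real t)"
  proof (rule integral_unique[OF has_integral_Ioi_of_vanishing])
    have "continuous_on {a..b} (\<lambda>t. g t * of_real t powr \<mu> / of_real t)"
      using \<open>0 < a\<close> deriv by (intro continuous_on_mult_powr_divide has_vector_derivative_continuous)
    then show "((\<lambda>t. g t * of_real t powr \<mu> / of_real t) has_integral
            integral {a..b} (\<lambda>t. g t * of_real t powr \<mu> / of_real t)) {a..b}"
      by (intro integrable_integral integrable_continuous_interval)
  qed (use vanish \<open>0 < a\<close> in auto)
  moreover have "norm ((\<Sum>n | real n \<le> b. w n * g (real n))
        - \<mu> * A * integral {a..b} (\<lambda>t. g t * of_real t powr \<mu> / of_real t)) \<le> D * (b - a)"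
  proof (rule abel_sum_sub_integral_bound)
    show "0 < a" "a \<le> b" by fact+
    show "(g has_vector_derivative g' t) (at t)" if "t \<in> {a..b}" for t
      using that by (rule deriv)
    show "g a = 0" "g b = 0" using vanish \<open>0 < a\<close> \<open>a \<le> b\<close> by auto
    show "w n * g (real n) = 0" if "real n < a" for n
      using that vanish[of "real n"] \<open>w 0 = 0\<close> by (cases "n = 0") auto
    show "norm (((\<Sum>n | real n \<le> t. w n) - A * of_real t powr \<mu>) * g' t) \<le> D"
      if "t \<in> {a..b}" for t
      using that by (rule bound)
  qed
  ultimately show ?thesis by simp
qed

lemma smoothed_sum_remainder_le:
  fixes w :: "nat \<Rightarrow> complex" and h h' :: "real \<Rightarrow> complex" and A \<mu> :: complex
  assumes "w 0 = 0" and "e \<ge> 0" and "0 < \<alpha>" and "\<alpha> \<le> \<beta>"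
    and vanish: "\<And>y. y > 0 \<Longrightarrow> y \<notin> {\<alpha>..\<beta>} \<Longrightarrow> h y = 0"
    and deriv: "\<And>y. y > 0 \<Longrightarrow> (h has_vector_derivative h' y) (at y)"
    and H: "\<And>y. y \<in> {\<alpha> / 4..(sqrt \<beta> + 1) ^ 2} \<Longrightarrow> norm (h' y) \<le> H"
    and "CE \<ge> 0" and remainder: "\<And>T. T \<ge> T1 \<Longrightarrow>
      norm ((\<Sum>n | real n \<le> T. w n) - A * of_real T powr \<mu>) \<le> CE * T powr e"
    and "0 \<le> T1" and x: "0 < x" "x \<le> 1" "x \<le> \<beta>" "4 * T1 ^ 2 * x \<le> \<alpha>"
  shows "norm ((\<Sum>n. w n * h (x * real n ^ 2))
            - \<mu> * A * integral {0<..} (\<lambda>u. h (x * u ^ 2) * of_real u powr \<mu> / of_real u))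
         \<le> 2 * CE * H * (2 powr (2 + e) * \<beta> powr (1 + e / 2)) * x powr (- e / 2)"
proof -
  define a where "a = sqrt (\<alpha> / x) / 2"
  define b where "b = sqrt (\<beta> / x) + 1"
  note window = square_rescaling_window[OF \<open>0 < \<alpha>\<close> \<open>\<alpha> \<le> \<beta>\<close> x(1-3), folded a_def b_def]
  have "T1 \<le> a" by (rule window(6)[OF \<open>0 \<le> T1\<close> x(4)])
  have "H \<ge> 0"
    using H[OF window(4)[of a]] window(2) by (simp add: order_trans[OF norm_ge_zero])
  have "norm ((\<Sum>n. w n * h (x * real n ^ 2))
            - \<mu> * A * integral {0<..} (\<lambda>u. h (x * u ^ 2) * of_real u powr \<mu> / of_real u))
      \<le> CE * b powr e * (2 * x * b * H) * (b - a)"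
  proof (rule smoothed_sum_sub_integral_le[where g = "\<lambda>t. h (x * t ^ 2)"
        and g' = "\<lambda>t. of_real (2 * x * t) * h' (x * t ^ 2)"])
    show "0 < a" "a \<le> b" "w 0 = 0" using window \<open>w 0 = 0\<close> by simp_all
    show "((\<lambda>t. h (x * t ^ 2)) has_vector_derivative of_real (2 * x * t) * h' (x * t ^ 2)) (at t)"
      if "t \<in> {a..b}" for t
      using that window(1) x by (intro has_vector_derivative_rescaled_square deriv) simp
    show "h (x * t ^ 2) = 0" if "t > 0" "t \<le> a \<or> b \<le> t" for t
      using that x window(5) by (intro vanish) auto
    show "norm (((\<Sum>n | real n \<le> t. w n) - A * of_real t powr \<mu>) * (of_real (2 * x * t) * h' (x * t ^ 2)))
        \<le> CE * b powr e * (2 * x * b * H)" if t: "t \<in> {a..b}" for t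
    proof -
      have "t > 0" using t window(1) by simp
      have E_le: "norm ((\<Sum>n | real n \<le> t. w n) - A * of_real t powr \<mu>) \<le> CE * b powr e"
        using remainder[of t] t \<open>T1 \<le> a\<close> \<open>CE \<ge> 0\<close> \<open>e \<ge> 0\<close> \<open>t > 0\<close>
        by (meson atLeastAtMost_iff mult_left_mono order_trans powr_mono2 less_imp_le)
      have G_le: "norm (of_real (2 * x * t) * h' (x * t ^ 2) :: complex) \<le> 2 * x * b * H"
        using H[OF window(4)[OF t]] t x \<open>t > 0\<close> by (simp add: norm_mult mult_mono)
      show ?thesis
        unfolding norm_mult[of _ "of_real (2 * x * t) * h' (x * t ^ 2)"]
        by (rule mult_mono[OF E_le G_le]) (simp_all add: \<open>CE \<ge> 0\<close>)
    qed
  qed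
  also have "\<dots> \<le> CE * b powr e * (2 * x * b * H) * b"
    using \<open>CE \<ge> 0\<close> \<open>H \<ge> 0\<close> window(1,2) x by (intro mult_left_mono) auto
  also have "\<dots> = 2 * CE * H * (x * b powr (2 + e))"
    using window(1,2) by (simp add: powr_add power2_eq_square)
  also have "x * b powr (2 + e) \<le> 2 powr (2 + e) * \<beta> powr (1 + e / 2) * x powr (- e / 2)"
    using window(1-3) x \<open>0 < \<alpha>\<close> \<open>\<alpha> \<le> \<beta>\<close> \<open>e \<ge> 0\<close> by (intro rescaled_powr_le) auto
  finally show ?thesis
    using \<open>CE \<ge> 0\<close> \<open>H \<ge> 0\<close> by (simp add: mult_left_mono mult.assoc)
qed

lemma bigo_at_top_powrE:
  fixes f :: "real \<Rightarrow> complex"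
  assumes "f \<in> O[at_top](\<lambda>T. of_real (T powr e))"
  obtains C T0 where "0 \<le> C" "0 \<le> T0" "\<And>T. T \<ge> T0 \<Longrightarrow> norm (f T) \<le> C * T powr e"
proof -
  obtain C where "C > 0" and "eventually (\<lambda>T. norm (f T) \<le> C * norm (of_real (T powr e) :: complex)) at_top"
    using assms by (elim landau_o.bigE)
  then obtain T0 where "\<And>T. T \<ge> T0 \<Longrightarrow> norm (f T) \<le> C * T powr e"
    by (auto simp: eventually_at_top_linorder)
  then show ?thesis
    using \<open>C > 0\<close> by (intro that[of C "max T0 0"]) auto
qed

lemma smoothed_sum_asymptotic:
  fixes w :: "nat \<Rightarrow> complex" and h :: "real \<Rightarrow> complex" and A \<mu> :: complex and e :: real
  assumes hC: "C0inf h" and "w 0 = 0" and "e \<ge> 0"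
    and remainder: "(\<lambda>T. (\<Sum>n | real n \<le> T. w n) - A * of_real T powr \<mu>)
                      \<in> O[at_top](\<lambda>T. of_real (T powr e))"
  shows "(\<lambda>x. (\<Sum>n. w n * h (x * real n ^ 2))
            - \<mu> * A * integral {0<..} (\<lambda>u. h (x * u ^ 2) * of_real u powr \<mu> / of_real u))
         \<in> O[at_right 0](\<lambda>x. of_real (x powr (- e / 2)))"
proof -
  define h' where "h' y = vector_derivative h (at y)" for y
  obtain \<alpha> \<beta> where "0 < \<alpha>" "\<alpha> \<le> \<beta>" and vanish: "\<And>y. y > 0 \<Longrightarrow> y \<notin> {\<alpha>..\<beta>} \<Longrightarrow> h y = 0"
    using C0inf_support[OF hC] by blast
  have "continuous_on {\<alpha> / 4..(sqrt \<beta> + 1) ^ 2} h'"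
    using \<open>0 < \<alpha>\<close> unfolding h'_def
    by (intro continuous_at_imp_continuous_on ballI C0inf_isCont_derivative[OF hC]) auto
  then obtain H where H: "\<And>y. y \<in> {\<alpha> / 4..(sqrt \<beta> + 1) ^ 2} \<Longrightarrow> norm (h' y) \<le> H"
    using continuous_on_compact_bound[OF compact_Icc] by blast
  obtain CE T1 where "0 \<le> CE" "0 \<le> T1" and remainder': "\<And>T. T \<ge> T1 \<Longrightarrow>
      norm ((\<Sum>n | real n \<le> T. w n) - A * of_real T powr \<mu>) \<le> CE * T powr e"
    using bigo_at_top_powrE[OF remainder] by blast
  have deriv: "(h has_vector_derivative h' y) (at y)" if "y > 0" for y
    unfolding h'_def using hC that by (rule C0inf_has_vector_derivative)
  define x0 where "x0 = min 1 (min \<beta> (\<alpha> / (4 * T1 ^ 2 + 1)))"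
  define K where "K = 2 * CE * H * (2 powr (2 + e) * \<beta> powr (1 + e / 2))"
  have "eventually (\<lambda>x. norm ((\<Sum>n. w n * h (x * real n ^ 2))
            - \<mu> * A * integral {0<..} (\<lambda>u. h (x * u ^ 2) * of_real u powr \<mu> / of_real u))
          \<le> K * norm (of_real (x powr (- e / 2)) :: complex)) (at_right 0)"
    unfolding eventually_at_right_field
  proof (intro exI[of _ x0] conjI allI impI)
    have pos: "0 < 4 * T1 ^ 2 + 1" using zero_le_power2[of T1] by linarith
    then show "0 < x0" using \<open>0 < \<alpha>\<close> \<open>\<alpha> \<le> \<beta>\<close> by (simp add: x0_def)
    fix x :: real assume x: "0 < x" "x < x0"
    have "4 * T1 ^ 2 * x \<le> (4 * T1 ^ 2 + 1) * x" using x by simp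
    also have "\<dots> < \<alpha>"
      using x pos by (simp add: x0_def pos_less_divide_eq mult.commute)
    finally have "4 * T1 ^ 2 * x \<le> \<alpha>" by simp
    moreover have "x \<le> 1" "x \<le> \<beta>" using x by (simp_all add: x0_def)
    ultimately have "norm ((\<Sum>n. w n * h (x * real n ^ 2))
            - \<mu> * A * integral {0<..} (\<lambda>u. h (x * u ^ 2) * of_real u powr \<mu> / of_real u))
          \<le> K * x powr (- e / 2)"
      unfolding K_def using \<open>0 < x\<close> \<open>0 \<le> T1\<close>
      by (intro smoothed_sum_remainder_le[OF \<open>w 0 = 0\<close> \<open>e \<ge> 0\<close> \<open>0 < \<alpha>\<close> \<open>\<alpha> \<le> \<beta>\<close> vanish deriv H
            \<open>0 \<le> CE\<close> remainder']) auto
    then show "norm ((\<Sum>n. w n * h (x * real n ^ 2))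
            - \<mu> * A * integral {0<..} (\<lambda>u. h (x * u ^ 2) * of_real u powr \<mu> / of_real u))
          \<le> K * norm (of_real (x powr (- e / 2)) :: complex)"
      by simp
  qed
  then show ?thesis by (rule bigoI)
qed

section \<open>The prime sum S2tilde\<close>

definition c2_log_weight :: "(nat \<Rightarrow> nat \<Rightarrow> complex) \<Rightarrow> nat \<Rightarrow> nat \<Rightarrow> complex" where
  "c2_log_weight c N p = (if prime p \<and> c N p \<noteq> 0 then c 2 p * of_real (ln (real p)) else 0)"

lemma S2tilde_eq_smoothed_sum:
  "S2tilde c N h = (\<lambda>x. \<Sum>n. c2_log_weight c N n * h (x * real n ^ 2))"
  unfolding S2tilde_def c2_log_weight_def by (intro ext suminf_cong) simp

lemma sum_c2_log_weight:
  "(\<Sum>p | prime p \<and> real p \<le> T \<and> c N p \<noteq> 0. c 2 p * of_real (ln (real p)))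
     = (\<Sum>n | real n \<le> T. c2_log_weight c N n)"
proof -
  have "{p. prime p \<and> real p \<le> T \<and> c N p \<noteq> 0} = {n \<in> {n. real n \<le> T}. prime n \<and> c N n \<noteq> 0}"
    by auto
  then show ?thesis
    unfolding c2_log_weight_def by (simp only:) (rule sum.inter_filter[OF finite_nat_le_real])
qed

lemma norm_c2_log_weight_le:
  assumes "selberg_class a" and "euler_product_rank a N c" and "N \<ge> 2" and "\<epsilon> > 0"
  obtains C where "\<And>n. norm (c2_log_weight c N n) \<le> C * real n powr (2 * \<epsilon>)"
proof -
  obtain C where "C \<ge> 0" and C: "\<And>p. prime p \<Longrightarrow> norm (c 2 p) \<le> C * real p powr \<epsilon>"
    using selberg_euler_coeff_2_bound[OF assms] by blast
  have "norm (c2_log_weight c N p) \<le> C / \<epsilon> * real p powr (2 * \<epsilon>)" for p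
  proof (cases "prime p \<and> c N p \<noteq> 0")
    case True
    then have p: "real p \<ge> 1" using prime_ge_1_nat by simp
    have "norm (c2_log_weight c N p) = norm (c 2 p) * ln (real p)"
      using True p by (simp add: c2_log_weight_def norm_mult)
    also have "\<dots> \<le> C * real p powr \<epsilon> * (real p powr \<epsilon> / \<epsilon>)"
      using C True ln_le_powr_divide[OF p \<open>\<epsilon> > 0\<close>] p \<open>C \<ge> 0\<close> by (intro mult_mono) auto
    also have "\<dots> = C / \<epsilon> * (real p powr \<epsilon> * real p powr \<epsilon>)"
      by simp
    also have "real p powr \<epsilon> * real p powr \<epsilon> = real p powr (2 * \<epsilon>)"
      by (metis mult_2 powr_add)
    finally show ?thesis .
  qed (use \<open>C \<ge> 0\<close> \<open>\<epsilon> > 0\<close> in \<open>auto simp: c2_log_weight_def\<close>)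
  then show ?thesis by (rule that)
qed

lemma S2tilde_bigo:
  assumes "selberg_class a" and "euler_product_rank a N c" and "N \<ge> 2" and "C0inf h" and "\<epsilon> > 0"
  shows "S2tilde c N h \<in> O[at_right 0](\<lambda>x. of_real (x powr (-1/2 - \<epsilon>)))"
proof -
  obtain C where "\<And>n. norm (c2_log_weight c N n) \<le> C * real n powr (2 * \<epsilon>)"
    using norm_c2_log_weight_le[OF assms(1-3,5)] by blast
  then have "S2tilde c N h \<in> O[at_right 0](\<lambda>x. of_real (x powr (- (1 + 2 * \<epsilon>) / 2)))"
    unfolding S2tilde_eq_smoothed_sum using \<open>\<epsilon> > 0\<close> by (intro smoothed_sum_bigo[OF assms(4)]) auto
  moreover have "- (1 + 2 * \<epsilon>) / 2 = -1/2 - \<epsilon>" by (simp add: field_simps)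
  ultimately show ?thesis by (simp only:)
qed

lemma S2tilde_asymptotic:
  assumes "C0inf h" and "\<nu> \<ge> 0" and "\<epsilon> > 0"
    and remainder: "\<forall>\<epsilon>>0. (\<lambda>T. (\<Sum>p | prime p \<and> real p \<le> T \<and> c N p \<noteq> 0. c 2 p * of_real (ln (real p)))
                      - A * of_real T powr \<mu>) \<in> O[at_top](\<lambda>T. of_real (T powr (\<nu> + \<epsilon>)))"
  shows "(\<lambda>x. S2tilde c N h x
            - \<mu> * A * integral {0<..} (\<lambda>u. h (x * u ^ 2) * of_real u powr \<mu> / of_real u))
         \<in> O[at_right 0](\<lambda>x. of_real (x powr (- \<nu> / 2 - \<epsilon>)))"
proof -
  have "(\<lambda>x. S2tilde c N h x
            - \<mu> * A * integral {0<..} (\<lambda>u. h (x * u ^ 2) * of_real u powr \<mu> / of_real u))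
         \<in> O[at_right 0](\<lambda>x. of_real (x powr (- (\<nu> + 2 * \<epsilon>) / 2)))"
    unfolding S2tilde_eq_smoothed_sum
  proof (rule smoothed_sum_asymptotic[OF assms(1)])
    show "c2_log_weight c N 0 = 0" by (simp add: c2_log_weight_def)
    show "0 \<le> \<nu> + 2 * \<epsilon>" using assms(2,3) by simp
    show "(\<lambda>T. (\<Sum>n | real n \<le> T. c2_log_weight c N n) - A * of_real T powr \<mu>)
        \<in> O[at_top](\<lambda>T. of_real (T powr (\<nu> + 2 * \<epsilon>)))"
      using remainder[rule_format, of "2 * \<epsilon>"] assms(3) unfolding sum_c2_log_weight by simp
  qed
  moreover have "- (\<nu> + 2 * \<epsilon>) / 2 = - \<nu> / 2 - \<epsilon>" by (simp add: field_simps)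
  ultimately show ?thesis by (simp only:)
qed

theorem lemma7:
  fixes \<phi> h :: "real \<Rightarrow> complex" and N :: nat and c :: "nat \<Rightarrow> nat \<Rightarrow> complex"
  assumes "N \<ge> 2"
    and "CL_class \<phi> N"
    and "euler_product_rank (\<lambda>n. \<phi> (real n)) N c"
    and "C0inf h"
  shows "(\<forall>\<epsilon>>0. S2tilde c N h \<in> O[at_right 0](\<lambda>x. of_real (x powr (-1/2 - \<epsilon>))))
    \<and> (\<forall>(A::complex) (\<mu>::complex) (\<nu>::real).
         \<nu> > 0 \<and> Re \<mu> > \<nu> \<and>
         (\<forall>\<epsilon>>0. (\<lambda>T. (\<Sum>p | prime p \<and> real p \<le> T \<and> c N p \<noteq> 0. c 2 p * of_real (ln (real p)))
                      - A * of_real T powr \<mu>)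
                 \<in> O[at_top](\<lambda>T. of_real (T powr (\<nu> + \<epsilon>))))
         \<longrightarrow> (\<forall>\<epsilon>>0. (\<lambda>x. S2tilde c N h x
                 - \<mu> * A * integral {0<..} (\<lambda>u. h (x * u ^ 2) * of_real u powr \<mu> / of_real u))
               \<in> O[at_right 0](\<lambda>x. of_real (x powr (- \<nu> / 2 - \<epsilon>)))))"
proof (intro conjI allI impI)
  fix \<epsilon> :: real assume "\<epsilon> > 0"
  have "selberg_class (\<lambda>n. \<phi> (real n))" using assms(2) by (simp add: CL_class_def)
  then show "S2tilde c N h \<in> O[at_right 0](\<lambda>x. of_real (x powr (-1/2 - \<epsilon>)))"
    using assms(3,1,4) \<open>\<epsilon> > 0\<close> by (rule S2tilde_bigo)
next
  fix A \<mu> :: complex and \<nu> \<epsilon> :: real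
  assume "\<nu> > 0 \<and> Re \<mu> > \<nu> \<and>
    (\<forall>\<epsilon>>0. (\<lambda>T. (\<Sum>p | prime p \<and> real p \<le> T \<and> c N p \<noteq> 0. c 2 p * of_real (ln (real p)))
                 - A * of_real T powr \<mu>) \<in> O[at_top](\<lambda>T. of_real (T powr (\<nu> + \<epsilon>))))"
    and "\<epsilon> > 0"
  then show "(\<lambda>x. S2tilde c N h x
      - \<mu> * A * integral {0<..} (\<lambda>u. h (x * u ^ 2) * of_real u powr \<mu> / of_real u))
      \<in> O[at_right 0](\<lambda>x. of_real (x powr (- \<nu> / 2 - \<epsilon>)))"
    using assms(4) by (intro S2tilde_asymptotic) auto
qed

end
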